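(* Assume (C). Let $h>0$, $n\ge1$, $T=nh$ and $a>0$ deterministic. Then $$\Delta\big(\mathcal G_0^{T},\widetilde{\mathcal G}_0^{\bar A_T(Y)}\big)=0\quad\text{and}\quad\Delta\big(\mathcal G_0^{\bar\tau_a(X)},\widetilde{\mathcal G}_0^{a}\big)=0.$$
   Context: $\sigma\in C^2(\mathbb R)$ satisfies (C): $0<\sigma_0^2\le\sigma^2\le\sigma_1^2$, $|\sigma'|+|\sigma''|\le K_\sigma$; $\mathcal F_K=\{b\in C^1(\mathbb R):|b|+|b'|\le K\}$; $f=b/\sigma^2$; $t_i=ih$. The continuous Euler scheme $\bar\xi$ solves $d\bar\xi_t=\bar b_h(t,\bar\xi)dt+\bar\sigma_h(t,\bar\xi)dW_t$, $\bar\xi_0=\eta$ ($W$ Brownian motion, $\eta$ initial variable with law independent of $b$), where $\bar b_h(t,x)=\sum_{i\ge1}b(x(t_{i-1}))1_{(t_{i-1},t_i]}(t)$, $\bar\sigma_h(t,x)=\sum_{i\ge1}\sigma(x(t_{i-1}))1_{(t_{i-1},t_i]}(t)$. Path functionals: $\bar\rho_t(x)=\int_0^t\bar\sigma_h^2(s,x)ds$, $\bar\tau_u(x)=\inf\{t\ge0:\bar\rho_t(x)\ge u\}$; $\bar A_0(y)=0$, $\bar A_t(y)=\bar A_{t_{i-1}}(y)+\sigma^2(y(\bar A_{t_{i-1}}(y)))(t-t_{i-1})$ for $t\in(t_{i-1},t_i]$. Canonical space $C=C(\mathbb R^+,\mathbb R)$ with canonical process written $X$ (filtration $\mathcal C^X_t=\bigcap_{s>t}\sigma(X_r,r\le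 s)$) or $Y$ (filtration $\mathcal C^Y_u$ likewise). $Q_b$ is the law of $\bar\xi$; $\widetilde Q_b$ is the law of $\bar\zeta_u=\bar\xi_{\bar\tau_u(\bar\xi)}$. For stopping times $T,A$: $\mathcal G_0^T=(C,\mathcal C^X_T,(Q_b|_{\mathcal C^X_T})_{b\in\mathcal F_K})$, $\widetilde{\mathcal G}_0^A=(C,\mathcal C^Y_A,(\widetilde Q_b|_{\mathcal C^Y_A})_{b\in\mathcal F_K})$. Le Cam distance: $\delta(\mathcal E,\mathcal G)=\inf_M\sup_b\|MP_b-Q_b\|_{TV}$ over Markov kernels $M$ (not depending on $b$), $\Delta=\max\{\delta(\mathcal E,\mathcal G),\delta(\mathcal G,\mathcal E)\}$. *)

theory Defs
  imports "HOL-Probability.Probability"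
begin

text \<open>Paths are represented as functions real => real which are continuous on [0,oo)
  and extensional (undefined) outside [0,oo).\<close>

definition Cspace :: "(real \<Rightarrow> real) set" where
  "Cspace = {x \<in> extensional {0..}. continuous_on {0..} x}"

text \<open>Borel sigma-algebra of C generated by the coordinates (trace of the product sigma-algebra).\<close>
definition Cmeas :: "(real \<Rightarrow> real) measure" where
  "Cmeas = restrict_space (PiM {0..} (\<lambda>_. borel)) Cspace"

definition coord_gen :: "real \<Rightarrow> (real \<Rightarrow> real) measure" where
  "coord_gen s = sigma Cspace {(\<lambda>x. x r) -` B \<inter> Cspace | r B. r \<in> {0..s} \<and> B \<in> sets borel}"

definition canon_filtr :: "real \<Rightarrow> (real \<Rightarrow> real) measure" where
  "canon_filtr t = sigma Cspace (\<Inter>s\<in>{t<..}. sets (coord_gen s))"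

definition stopped_sigma :: "((real \<Rightarrow> real) \<Rightarrow> real) \<Rightarrow> (real \<Rightarrow> real) measure" where
  "stopped_sigma T = filtration.pre_sigma Cspace canon_filtr T"

fun euler_grid :: "(real \<Rightarrow> real) \<Rightarrow> (real \<Rightarrow> real) \<Rightarrow> real \<Rightarrow> real \<Rightarrow> (real \<Rightarrow> real) \<Rightarrow> nat \<Rightarrow> real" where
  "euler_grid b \<sigma> h x0 w 0 = x0"
| "euler_grid b \<sigma> h x0 w (Suc i) =
     (let y = euler_grid b \<sigma> h x0 w i
      in y + b y * h + \<sigma> y * (w (real (Suc i) * h) - w (real i * h)))"

text \<open>Continuous Euler scheme: the solution of
  d xi_t = bbar_h(t,xi) dt + sigmabar_h(t,xi) dW_t, xi_0 = x0; on (t_{i-1}, t_i] the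
  coefficients are frozen, so the stochastic integral is the elementary one.\<close>
definition euler_path :: "(real \<Rightarrow> real) \<Rightarrow> (real \<Rightarrow> real) \<Rightarrow> real \<Rightarrow> real \<Rightarrow> (real \<Rightarrow> real) \<Rightarrow> real \<Rightarrow> real" where
  "euler_path b \<sigma> h x0 w = (\<lambda>t\<in>{0..}.
     if t = 0 then x0
     else (let i = nat \<lceil>t / h\<rceil> - 1; y = euler_grid b \<sigma> h x0 w i
           in y + b y * (t - real i * h) + \<sigma> y * (w t - w (real i * h))))"

text \<open>sigmabar_h(t,x) = sum_{i>=1} sigma(x(t_{i-1})) 1_{(t_{i-1},t_i]}(t)\<close>
definition sigma_bar :: "(real \<Rightarrow> real) \<Rightarrow> real \<Rightarrow> real \<Rightarrow> (real \<Rightarrow> real) \<Rightarrow> real" where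
  "sigma_bar \<sigma> h t x = (if t \<le> 0 then 0 else \<sigma> (x (real (nat \<lceil>t / h\<rceil> - 1) * h)))"

definition rho_bar :: "(real \<Rightarrow> real) \<Rightarrow> real \<Rightarrow> real \<Rightarrow> (real \<Rightarrow> real) \<Rightarrow> real" where
  "rho_bar \<sigma> h t x = integral {0..t} (\<lambda>s. (sigma_bar \<sigma> h s x)\<^sup>2)"

definition tau_bar :: "(real \<Rightarrow> real) \<Rightarrow> real \<Rightarrow> real \<Rightarrow> (real \<Rightarrow> real) \<Rightarrow> real" where
  "tau_bar \<sigma> h u x = Inf {t. 0 \<le> t \<and> u \<le> rho_bar \<sigma> h t x}"

fun A_grid :: "(real \<Rightarrow> real) \<Rightarrow> real \<Rightarrow> (real \<Rightarrow> real) \<Rightarrow> nat \<Rightarrow> real" where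
  "A_grid \<sigma> h y 0 = 0"
| "A_grid \<sigma> h y (Suc i) = A_grid \<sigma> h y i + (\<sigma> (y (A_grid \<sigma> h y i)))\<^sup>2 * h"

text \<open>Abar_0(y) = 0, Abar_t(y) = Abar_{t_{i-1}}(y) + sigma^2(y(Abar_{t_{i-1}}(y)))(t - t_{i-1}) on (t_{i-1},t_i]\<close>
definition A_bar :: "(real \<Rightarrow> real) \<Rightarrow> real \<Rightarrow> real \<Rightarrow> (real \<Rightarrow> real) \<Rightarrow> real" where
  "A_bar \<sigma> h t y = (if t \<le> 0 then 0 else
     (let i = nat \<lceil>t / h\<rceil> - 1; a = A_grid \<sigma> h y i
      in a + (\<sigma> (y a))\<^sup>2 * (t - real i * h)))"

definition time_change :: "(real \<Rightarrow> real) \<Rightarrow> real \<Rightarrow> (real \<Rightarrow> real) \<Rightarrow> real \<Rightarrow> real" where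
  "time_change \<sigma> h x = (\<lambda>u\<in>{0..}. x (tau_bar \<sigma> h u x))"

definition brownian_motion :: "'w measure \<Rightarrow> (real \<Rightarrow> 'w \<Rightarrow> real) \<Rightarrow> bool" where
  "brownian_motion M W \<longleftrightarrow> prob_space M \<and>
     (\<forall>\<omega>\<in>space M. W 0 \<omega> = 0 \<and> continuous_on {0..} (\<lambda>t. W t \<omega>)) \<and>
     (\<forall>s t. 0 \<le> s \<and> s < t \<longrightarrow>
        distributed M lborel (\<lambda>\<omega>. W t \<omega> - W s \<omega>) (normal_density 0 (sqrt (t - s)))) \<and>
     (\<forall>(ts :: nat \<Rightarrow> real) k. 0 \<le> ts 0 \<and> (\<forall>j. ts j < ts (Suc j)) \<longrightarrow>
        prob_space.indep_vars M (\<lambda>_. borel) (\<lambda>j \<omega>. W (ts (Suc j)) \<omega> - W (ts j) \<omega>) {..<k})"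

definition Q_law :: "'w measure \<Rightarrow> (real \<Rightarrow> 'w \<Rightarrow> real) \<Rightarrow> ('w \<Rightarrow> real) \<Rightarrow> (real \<Rightarrow> real) \<Rightarrow> real
    \<Rightarrow> (real \<Rightarrow> real) \<Rightarrow> (real \<Rightarrow> real) measure" where
  "Q_law M W \<eta> \<sigma> h b = distr M Cmeas (\<lambda>\<omega>. euler_path b \<sigma> h (\<eta> \<omega>) (\<lambda>t. W t \<omega>))"

definition Qt_law :: "'w measure \<Rightarrow> (real \<Rightarrow> 'w \<Rightarrow> real) \<Rightarrow> ('w \<Rightarrow> real) \<Rightarrow> (real \<Rightarrow> real) \<Rightarrow> real
    \<Rightarrow> (real \<Rightarrow> real) \<Rightarrow> (real \<Rightarrow> real) measure" where
  "Qt_law M W \<eta> \<sigma> h b = distr M Cmeas (\<lambda>\<omega>. time_change \<sigma> h (euler_path b \<sigma> h (\<eta> \<omega>) (\<lambda>t. W t \<omega>)))"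

definition FK :: "real \<Rightarrow> (real \<Rightarrow> real) set" where
  "FK K = {b. (\<forall>x. b differentiable at x) \<and> continuous_on UNIV (deriv b) \<and>
              (\<forall>x. \<bar>b x\<bar> + \<bar>deriv b x\<bar> \<le> K)}"

definition tv_dist :: "'a measure \<Rightarrow> 'a measure \<Rightarrow> real" where
  "tv_dist P Q = (SUP A\<in>sets P. \<bar>measure P A - measure Q A\<bar>)"

text \<open>Deficiency delta(E,G) of the experiment (E, P_theta) w.r.t. (G, Q_theta), theta in Theta:
  infimum over Markov kernels K from E to G of sup_theta ||K P_theta - Q_theta||_TV
  (the supremum over the empty parameter set is taken to be 0).\<close>
definition deficiency :: "'a measure \<Rightarrow> ('p \<Rightarrow> 'a measure) \<Rightarrow> 'b measure \<Rightarrow> ('p \<Rightarrow> 'b measure)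
    \<Rightarrow> 'p set \<Rightarrow> real" where
  "deficiency E P G Q \<Theta> =
     (INF K\<in>measurable E (prob_algebra G). Sup (insert 0 ((\<lambda>\<theta>. tv_dist (bind (P \<theta>) K) (Q \<theta>)) ` \<Theta>)))"

definition le_cam_dist :: "'a measure \<Rightarrow> ('p \<Rightarrow> 'a measure) \<Rightarrow> 'b measure \<Rightarrow> ('p \<Rightarrow> 'b measure)
    \<Rightarrow> 'p set \<Rightarrow> real" where
  "le_cam_dist E P G Q \<Theta> = max (deficiency E P G Q \<Theta>) (deficiency G Q E P \<Theta>)"

end

theory Submission
  imports Defs
begin

text \<open>
  The two Le Cam distances vanish because both pairs of experiments are images of each other
  under measurable maps.  The time change \<open>phi x = x \<circ> tau_bar(x)\<close> of the path space \<open>C\<close> is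
  undone by \<open>psi y = y \<circ> A_bar(y)\<close>, i.e. \<open>psi (phi x) = x\<close>: since \<open>sigma\<^sup>2\<close> lies in \<open>[s0, s1]\<close> with
  \<open>s0 > 0\<close>, the clock \<open>rho_bar(x)\<close> is a strictly increasing bi-Lipschitz function of time,
  \<open>tau_bar(x)\<close> is its inverse, and \<open>A_bar(phi x) = rho_bar(x)\<close>.  By definition
  \<open>Qtilde_b = phi(Q_b)\<close>.
\<close>

text \<open>Cells of the time grid: \<open>t \<in> (k h, (k+1) h]\<close> has cell index \<open>\<lceil>t/h\<rceil> - 1 = k\<close>, and every
  \<open>t \<ge> 0\<close> lies in the closed cell of index \<open>\<lfloor>t/h\<rfloor>\<close>.\<close>

lemma grid_cell_index:
  fixes h t :: real
  assumes h: "h > 0" and "real k * h < t" "t \<le> real (Suc k) * h"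
  shows "nat \<lceil>t / h\<rceil> - 1 = k"
proof -
  have "real k < t / h" "t / h \<le> real (Suc k)" using assms by (auto simp: field_simps)
  then have "\<lceil>t / h\<rceil> = int (Suc k)" by (subst ceiling_eq_iff) auto
  then show ?thesis by simp
qed

lemma grid_cell_floor:
  fixes h t :: real
  assumes h: "h > 0" and t: "t \<ge> 0"
  shows "real (nat \<lfloor>t / h\<rfloor>) * h \<le> t \<and> t \<le> real (Suc (nat \<lfloor>t / h\<rfloor>)) * h"
proof -
  have "real (nat \<lfloor>t / h\<rfloor>) = of_int \<lfloor>t / h\<rfloor>" using t h by simp
  moreover have "of_int \<lfloor>t / h\<rfloor> \<le> t / h" "t / h < of_int \<lfloor>t / h\<rfloor> + 1" by linarith+
  ultimately have "real (nat \<lfloor>t / h\<rfloor>) \<le> t / h" "t / h \<le> real (nat \<lfloor>t / h\<rfloor>) + 1" by linarith+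
  then show ?thesis using h by (auto simp: field_simps)
qed

lemma nat_grid_cover:
  fixes v \<delta> :: real
  assumes \<delta>: "\<delta> > 0" and v: "v \<ge> 0"
  shows "\<exists>j::nat. v \<le> real j * \<delta> \<and> (real j - 1) * \<delta> < v"
proof
  define j where "j = nat \<lceil>v / \<delta>\<rceil>"
  have "real j = of_int \<lceil>v / \<delta>\<rceil>" using \<delta> v by (simp add: j_def)
  then have "v / \<delta> \<le> real j" "real j - 1 < v / \<delta>" by linarith+
  then show "v \<le> real j * \<delta> \<and> (real j - 1) * \<delta> < v"
    using \<delta> by (simp add: divide_le_eq less_divide_eq)
qed

text \<open>Approximation from below by the grid points \<open>\<lfloor>n t\<rfloor> / n\<close>, used to evaluate a path at a random time.\<close>

lemma floor_approx_LIMSEQ: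
  fixes t :: real
  shows "(\<lambda>n. real_of_int \<lfloor>t * real (Suc n)\<rfloor> / real (Suc n)) \<longlonglongrightarrow> t"
proof (rule tendsto_sandwich[where f="\<lambda>n. t - inverse (real (Suc n))" and h="\<lambda>n. t"])
  show "\<forall>\<^sub>F n in sequentially. t - inverse (real (Suc n)) \<le> real_of_int \<lfloor>t * real (Suc n)\<rfloor> / real (Suc n)"
  proof (intro always_eventually allI)
    fix n
    define N where "N = real (Suc n)"
    have N: "0 < N" by (simp add: N_def)
    have "(t - inverse N) * N = t * N - 1" using N by (simp add: algebra_simps)
    also have "\<dots> \<le> real_of_int \<lfloor>t * N\<rfloor>" by linarith
    finally have "t - inverse N \<le> real_of_int \<lfloor>t * N\<rfloor> / N" using N by (simp add: pos_le_divide_eq)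
    then show "t - inverse (real (Suc n)) \<le> real_of_int \<lfloor>t * real (Suc n)\<rfloor> / real (Suc n)"
      unfolding N_def .
  qed
  show "\<forall>\<^sub>F n in sequentially. real_of_int \<lfloor>t * real (Suc n)\<rfloor> / real (Suc n) \<le> t"
  proof (intro always_eventually allI)
    fix n
    have "real_of_int \<lfloor>t * real (Suc n)\<rfloor> \<le> t * real (Suc n)" by linarith
    then show "real_of_int \<lfloor>t * real (Suc n)\<rfloor> / real (Suc n) \<le> t"
      by (simp add: field_simps del: of_nat_Suc)
  qed
  show "(\<lambda>n. t - inverse (real (Suc n))) \<longlonglongrightarrow> t"
    using tendsto_diff[OF tendsto_const LIMSEQ_inverse_real_of_nat, of t] by simp
qed simp

lemma continuous_on_from_increments:
  fixes f :: "real \<Rightarrow> real"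
  assumes L: "0 \<le> L" and incr: "\<And>u v. 0 \<le> u \<Longrightarrow> u \<le> v \<Longrightarrow> 0 \<le> f v - f u \<and> f v - f u \<le> L * (v - u)"
  shows "continuous_on {0..} f"
proof -
  have "L-lipschitz_on {0..} f"
  proof (rule lipschitz_onI[OF _ L])
    fix u v :: real assume "u \<in> {0..}" "v \<in> {0..}"
    then show "dist (f u) (f v) \<le> L * dist u v"
      using incr[of u v] incr[of v u] by (cases "u \<le> v") (auto simp: dist_real_def)
  qed
  then show ?thesis by (rule lipschitz_on_continuous_on)
qed

section \<open>The canonical filtration and stopped sigma-algebras\<close>

definition coord_gens :: "real \<Rightarrow> (real \<Rightarrow> real) set set" where
  "coord_gens s = {(\<lambda>x. x r) -` B \<inter> Cspace | r B. r \<in> {0..s} \<and> B \<in> sets borel}"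

lemma coord_gens_subset: "coord_gens s \<subseteq> Pow Cspace"
  by (auto simp: coord_gens_def)

lemma space_coord_gen [simp]: "space (coord_gen s) = Cspace"
  using coord_gens_subset unfolding coord_gen_def coord_gens_def by (rule space_measure_of)

lemma sets_coord_gen: "sets (coord_gen s) = sigma_sets Cspace (coord_gens s)"
  using coord_gens_subset unfolding coord_gen_def coord_gens_def by (rule sets_measure_of)

lemma coord_measurable: "r \<in> {0..s} \<Longrightarrow> (\<lambda>x. x r) \<in> borel_measurable (coord_gen s)"
  by (rule measurableI) (auto simp: sets_coord_gen coord_gens_def)

lemma space_Cmeas [simp]: "space Cmeas = Cspace"
  unfolding Cmeas_def by (auto simp: space_restrict_space space_PiM Cspace_def extensional_def PiE_def)

lemma coord_gen_subset_Cmeas: "sets (coord_gen s) \<subseteq> sets Cmeas"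
proof -
  have "coord_gens s \<subseteq> sets Cmeas"
  proof
    fix A assume "A \<in> coord_gens s"
    then obtain r B where A: "A = (\<lambda>x. x r) -` B \<inter> Cspace" and rB: "r \<in> {0..s}" "B \<in> sets borel"
      by (auto simp: coord_gens_def)
    have "(\<lambda>x. x r) \<in> borel_measurable Cmeas"
      unfolding Cmeas_def
      by (rule measurable_restrict_space1) (use rB in \<open>auto intro: measurable_component_singleton\<close>)
    from measurable_sets[OF this rB(2)] show "A \<in> sets Cmeas" using A by simp
  qed
  then show ?thesis
    using sets.sigma_sets_subset[of "coord_gens s" Cmeas] sets_coord_gen by simp
qed

lemma coord_gen_subalgebra: "subalgebra Cmeas (coord_gen s)"
  using coord_gen_subset_Cmeas by (simp add: subalgebra_def)

lemma canon_filtr_gens_subset: "(\<Inter>s\<in>{t<..}. sets (coord_gen s)) \<subseteq> Pow Cspace"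
proof -
  have "(\<Inter>s\<in>{t<..}. sets (coord_gen s)) \<subseteq> sets (coord_gen (t + 1))" by auto
  then show ?thesis using sets.space_closed[of "coord_gen (t + 1)"] by simp
qed

lemma space_canon_filtr [simp]: "space (canon_filtr t) = Cspace"
  unfolding canon_filtr_def by (rule space_measure_of) (rule canon_filtr_gens_subset)

lemma sets_canon_filtr: "sets (canon_filtr t) = sigma_sets Cspace (\<Inter>s\<in>{t<..}. sets (coord_gen s))"
  unfolding canon_filtr_def by (rule sets_measure_of) (rule canon_filtr_gens_subset)

lemma canon_filtr_subset_coord_gen: "t < s \<Longrightarrow> sets (canon_filtr t) \<subseteq> sets (coord_gen s)"
  unfolding sets_canon_filtr
  using sets.sigma_sets_subset[of "\<Inter>s\<in>{t<..}. sets (coord_gen s)" "coord_gen s"] by auto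

lemma canon_filtrI: "(\<And>s. t < s \<Longrightarrow> A \<in> sets (coord_gen s)) \<Longrightarrow> A \<in> sets (canon_filtr t)"
  unfolding sets_canon_filtr by (rule sigma_sets.Basic) auto

lemma filtration_canon_filtr: "filtration Cspace canon_filtr"
proof
  fix i j :: real assume "i \<le> j"
  then have "(\<Inter>s\<in>{i<..}. sets (coord_gen s)) \<subseteq> (\<Inter>s\<in>{j<..}. sets (coord_gen s))" by auto
  then show "sets (canon_filtr i) \<subseteq> sets (canon_filtr j)"
    unfolding sets_canon_filtr by (rule sigma_sets_mono')
qed simp

definition stopped_events :: "((real \<Rightarrow> real) \<Rightarrow> real) \<Rightarrow> (real \<Rightarrow> real) set set" where
  "stopped_events S = {A. \<forall>t. {x\<in>A. S x \<le> t} \<in> sets (canon_filtr t)}"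

lemma stopped_events_subset: "stopped_events S \<subseteq> Pow Cspace"
proof
  fix A assume A: "A \<in> stopped_events S"
  have "{y\<in>A. S y \<le> S x} \<subseteq> Cspace" for x
    using A sets.sets_into_space[of _ "canon_filtr (S x)"] by (auto simp: stopped_events_def)
  then show "A \<in> Pow Cspace" by blast
qed

lemma stopped_sigma_eq: "stopped_sigma S = sigma Cspace (stopped_events S)"
  unfolding stopped_sigma_def stopped_events_def
  by (rule filtration.pre_sigma_def[OF filtration_canon_filtr])

lemma space_stopped_sigma [simp]: "space (stopped_sigma S) = Cspace"
  unfolding stopped_sigma_eq by (rule space_measure_of) (rule stopped_events_subset)

lemma sets_stopped_sigma: "sets (stopped_sigma S) = sigma_sets Cspace (stopped_events S)"
  unfolding stopped_sigma_eq by (rule sets_measure_of) (rule stopped_events_subset)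

lemma stopped_eventsD: "A \<in> stopped_events S \<Longrightarrow> A \<in> sets (stopped_sigma S)"
  unfolding sets_stopped_sigma by (rule sigma_sets.Basic)

lemma stopped_event_slice:
  assumes "A \<in> stopped_events S" and "c < c'"
  shows "{x\<in>A. S x \<le> c} \<in> sets (coord_gen c')"
proof -
  have "{x\<in>A. S x \<le> c} \<in> sets (canon_filtr c)" using assms(1) by (simp add: stopped_events_def)
  then show ?thesis using canon_filtr_subset_coord_gen[OF assms(2)] by (rule subsetD[rotated])
qed

lemma stopped_events_const: "stopped_events (\<lambda>_. c) = sets (canon_filtr c)"
proof (intro set_eqI iffI)
  fix A assume "A \<in> stopped_events (\<lambda>_. c)"
  then have "\<forall>t. {x\<in>A. c \<le> t} \<in> sets (canon_filtr t)"
    unfolding stopped_events_def by (rule CollectD)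
  then have "{x\<in>A. c \<le> c} \<in> sets (canon_filtr c)" by (rule spec)
  then show "A \<in> sets (canon_filtr c)" by simp
next
  fix A assume A: "A \<in> sets (canon_filtr c)"
  have "{x\<in>A. c \<le> t} \<in> sets (canon_filtr t)" for t
  proof (cases "c \<le> t")
    case True
    have "A \<in> sets (canon_filtr t)"
      using A filtration.sets_F_mono[OF filtration_canon_filtr True] by (rule subsetD[rotated])
    then show ?thesis using True by simp
  qed simp
  then show "A \<in> stopped_events (\<lambda>_. c)" unfolding stopped_events_def by (intro CollectI allI)
qed

lemma measurable_stopped_sigmaI:
  assumes "\<And>x. x \<in> Cspace \<Longrightarrow> f x \<in> Cspace"
    and "\<And>A. A \<in> stopped_events S' \<Longrightarrow> f -` A \<inter> Cspace \<in> sets (stopped_sigma S)"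
  shows "f \<in> measurable (stopped_sigma S) (stopped_sigma S')"
  unfolding stopped_sigma_eq[of S']
proof (rule measurable_measure_of[OF stopped_events_subset])
  show "f \<in> space (stopped_sigma S) \<rightarrow> Cspace" using assms(1) by simp
  fix A assume "A \<in> stopped_events S'"
  then show "f -` A \<inter> space (stopped_sigma S) \<in> sets (stopped_sigma S)" using assms(2) by simp
qed

text \<open>Every stopped sigma-algebra consists of Borel sets of \<open>C\<close>: a stopped event is the countable union
  of its slices \<open>{S \<le> n}\<close>.\<close>

lemma stopped_sigma_subalgebra: "subalgebra Cmeas (stopped_sigma S)"
proof -
  have "stopped_events S \<subseteq> sets Cmeas"
  proof
    fix A assume A: "A \<in> stopped_events S"
    have "A = (\<Union>n::nat. {x\<in>A. S x \<le> real n})"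
    proof (intro equalityI subsetI)
      fix x assume "x \<in> A"
      moreover obtain n :: nat where "S x \<le> real n" using real_arch_simple by blast
      ultimately show "x \<in> (\<Union>n::nat. {x\<in>A. S x \<le> real n})" by blast
    qed auto
    also have "\<dots> \<in> sets Cmeas"
    proof (rule sets.countable_UN''[OF countableI_type])
      fix n :: nat
      have "{x\<in>A. S x \<le> real n} \<in> sets (coord_gen (real n + 1))"
        by (rule stopped_event_slice[OF A]) simp
      then show "{x\<in>A. S x \<le> real n} \<in> sets Cmeas" using coord_gen_subset_Cmeas by (rule subsetD[rotated])
    qed
    finally show "A \<in> sets Cmeas" .
  qed
  then have "sigma_sets (space Cmeas) (stopped_events S) \<subseteq> sets Cmeas"
    by (rule sets.sigma_sets_subset)
  then show ?thesis by (simp add: subalgebra_def sets_stopped_sigma)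
qed

lemma measurable_CmeasI:
  assumes C: "\<And>\<omega>. \<omega> \<in> space M \<Longrightarrow> f \<omega> \<in> Cspace"
    and coords: "\<And>r. 0 \<le> r \<Longrightarrow> (\<lambda>\<omega>. f \<omega> r) \<in> borel_measurable M"
  shows "f \<in> measurable M Cmeas"
  unfolding Cmeas_def
proof (rule measurable_restrict_space2)
  show "f \<in> space M \<rightarrow> Cspace" using C by blast
  have "f \<omega> \<in> (\<Pi>\<^sub>E r\<in>{0..}. space borel)" if "\<omega> \<in> space M" for \<omega>
    using C[OF that] by (simp add: Cspace_def PiE_iff)
  then have "(\<lambda>\<omega> r. f \<omega> r) \<in> space M \<rightarrow> (\<Pi>\<^sub>E r\<in>{0..}. space borel)" by blast
  then show "f \<in> M \<rightarrow>\<^sub>M Pi\<^sub>M {0..} (\<lambda>_. borel)"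
    using coords by (intro measurable_PiM_single') simp_all
qed

lemma coord_gen_pullback:
  assumes D: "D \<in> sets (coord_gen s)"
    and Phi: "\<And>x. x \<in> D \<Longrightarrow> Phi x \<in> Cspace"
    and coords: "\<And>r. r \<in> {0..c} \<Longrightarrow> \<exists>g\<in>borel_measurable (coord_gen s). \<forall>x\<in>D. g x = Phi x r"
    and A: "A \<in> sets (coord_gen c)"
  shows "{x\<in>D. Phi x \<in> A} \<in> sets (coord_gen s)"
proof -
  have "A \<in> sigma_sets Cspace (coord_gens c)" using A by (simp add: sets_coord_gen)
  then show ?thesis
  proof (induction rule: sigma_sets.induct)
    case (Basic a)
    then obtain r B where a: "a = (\<lambda>y. y r) -` B \<inter> Cspace" and rB: "r \<in> {0..c}" "B \<in> sets borel"
      by (auto simp: coord_gens_def)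
    obtain g where g: "g \<in> borel_measurable (coord_gen s)" "\<forall>x\<in>D. g x = Phi x r"
      using coords[OF rB(1)] by blast
    have "g -` B \<inter> space (coord_gen s) \<in> sets (coord_gen s)" using g(1) rB(2) by (rule measurable_sets)
    then have "(g -` B \<inter> Cspace) \<inter> D \<in> sets (coord_gen s)" using D by auto
    moreover have "(g -` B \<inter> Cspace) \<inter> D = {x\<in>D. Phi x \<in> a}"
      using g(2) a Phi sets.sets_into_space[OF D] by auto
    ultimately show ?case by simp
  next
    case (Compl a)
    have "{x\<in>D. Phi x \<in> Cspace - a} = D - {x\<in>D. Phi x \<in> a}" using Phi by auto
    then show ?case using Compl D by auto
  next
    case (Union a)
    have "{x\<in>D. Phi x \<in> \<Union> (range a)} = (\<Union>i. {x\<in>D. Phi x \<in> a i})" by auto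
    then show ?case using Union by auto
  qed simp
qed

text \<open>Evaluating a continuous path at an \<open>\<sigma>(X_r, r \<le> s)\<close>-measurable time \<open>\<tau> \<in> [0, s]\<close> gives an
  \<open>\<sigma>(X_r, r \<le> s)\<close>-measurable variable: it is the pointwise limit of evaluations at the
  discretised times \<open>\<lfloor>n \<tau>\<rfloor> / n\<close>, which take countably many values.\<close>

lemma eval_at_random_time:
  assumes tau: "\<tau> \<in> borel_measurable (coord_gen s)" and s: "0 \<le> s"
    and range: "\<And>x. x \<in> Cspace \<Longrightarrow> 0 \<le> \<tau> x \<and> \<tau> x \<le> s"
  shows "(\<lambda>x. x (\<tau> x)) \<in> borel_measurable (coord_gen s)"
proof (rule borel_measurable_LIMSEQ_real)
  define clip where "clip v = max 0 (min s v)" for v :: real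
  define u where "u n x = x (clip (real_of_int \<lfloor>\<tau> x * real (Suc n)\<rfloor> / real (Suc n)))" for n x
  show "u n \<in> borel_measurable (coord_gen s)" for n
  proof -
    have "(\<lambda>x. x (clip (real_of_int k / real (Suc n)))) \<in> borel_measurable (coord_gen s)" for k :: int
      by (rule coord_measurable) (use s in \<open>auto simp: clip_def\<close>)
    moreover have "(\<lambda>x. \<lfloor>\<tau> x * real (Suc n)\<rfloor>) \<in> measurable (coord_gen s) (count_space UNIV)"
      by (rule measurable_compose[OF _ measurable_real_floor]) (use tau in simp)
    ultimately show ?thesis unfolding u_def by (rule measurable_compose_countable)
  qed
  fix x assume "x \<in> space (coord_gen s)"
  then have x: "x \<in> Cspace" by simp
  let ?v = "\<lambda>n. real_of_int \<lfloor>\<tau> x * real (Suc n)\<rfloor> / real (Suc n)"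
  have v: "0 \<le> ?v n \<and> ?v n \<le> s" for n
  proof
    have "real_of_int \<lfloor>\<tau> x * real (Suc n)\<rfloor> \<le> \<tau> x * real (Suc n)" by linarith
    then have "?v n \<le> \<tau> x" by (simp add: field_simps del: of_nat_Suc)
    then show "?v n \<le> s" using range[OF x] by simp
    show "0 \<le> ?v n" using range[OF x] by simp
  qed
  have "(\<lambda>n. x (?v n)) \<longlonglongrightarrow> x (\<tau> x)"
    using x range[OF x] v
    by (intro continuous_on_tendsto_compose[OF _ floor_approx_LIMSEQ]) (auto simp: Cspace_def)
  moreover have "u n x = x (?v n)" for n using v[of n] by (simp add: u_def clip_def)
  ultimately show "(\<lambda>n. u n x) \<longlonglongrightarrow> x (\<tau> x)" by simp
qed

section \<open>The clocks \<open>rho_bar\<close>, \<open>tau_bar\<close>, \<open>A_bar\<close> and the time change\<close>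

locale bounded_volatility =
  fixes \<sigma> :: "real \<Rightarrow> real" and h s0 s1 :: real
  assumes h: "h > 0" and s0: "s0 > 0" and sigma_sq_bounds: "\<And>v. s0 \<le> (\<sigma> v)\<^sup>2 \<and> (\<sigma> v)\<^sup>2 \<le> s1"
    and sigma_cont: "continuous_on UNIV \<sigma>"
begin

lemma s1_pos: "s1 > 0"
  using sigma_sq_bounds[of 0] s0 by linarith

definition rho_grid :: "(real \<Rightarrow> real) \<Rightarrow> nat \<Rightarrow> real" where
  "rho_grid x k = (\<Sum>j<k. (\<sigma> (x (real j * h)))\<^sup>2 * h)"

text \<open>On a cell the frozen volatility is constant, so the integrand of \<open>rho_bar\<close> integrates exactly.\<close>

lemma sigma_bar_on_cell:
  assumes "real k * h < s" "s \<le> real (Suc k) * h"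
  shows "sigma_bar \<sigma> h s x = \<sigma> (x (real k * h))"
proof -
  have "s > 0" using assms h by (smt (verit) mult_nonneg_nonneg of_nat_0_le_iff)
  then show ?thesis using grid_cell_index[OF h assms] by (simp add: sigma_bar_def)
qed

lemma sigma_bar_sq_has_integral_cell:
  assumes "real k * h \<le> t" "t \<le> real (Suc k) * h"
  shows "((\<lambda>s. (sigma_bar \<sigma> h s x)\<^sup>2) has_integral (\<sigma> (x (real k * h)))\<^sup>2 * (t - real k * h)) {real k * h..t}"
proof -
  have const: "((\<lambda>s. (\<sigma> (x (real k * h)))\<^sup>2) has_integral (\<sigma> (x (real k * h)))\<^sup>2 * (t - real k * h)) {real k * h..t}"
    using has_integral_const_real[of "(\<sigma> (x (real k * h)))\<^sup>2" "real k * h" t] assms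
    by (simp add: mult.commute)
  have on_cell: "(sigma_bar \<sigma> h s x)\<^sup>2 = (\<sigma> (x (real k * h)))\<^sup>2"
    if "s \<in> {real k * h..t} - {real k * h}" for s
    using that assms sigma_bar_on_cell[of k s x] by auto
  show ?thesis
    by (rule has_integral_spike_finite[where S="{real k * h}", OF _ on_cell const]) auto
qed

lemma rho_has_integral:
  assumes "real k * h \<le> t" "t \<le> real (Suc k) * h"
  shows "((\<lambda>s. (sigma_bar \<sigma> h s x)\<^sup>2) has_integral (rho_grid x k + (\<sigma> (x (real k * h)))\<^sup>2 * (t - real k * h))) {0..t}"
  using assms
proof (induction k arbitrary: t)
  case 0
  then show ?case using sigma_bar_sq_has_integral_cell[of 0 t x] by (simp add: rho_grid_def)
next
  case (Suc k)
  have left: "((\<lambda>s. (sigma_bar \<sigma> h s x)\<^sup>2) has_integral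
      (rho_grid x k + (\<sigma> (x (real k * h)))\<^sup>2 * (real (Suc k) * h - real k * h))) {0..real (Suc k) * h}"
    using Suc.IH[of "real (Suc k) * h"] h by (simp add: field_simps)
  have right: "((\<lambda>s. (sigma_bar \<sigma> h s x)\<^sup>2) has_integral
      ((\<sigma> (x (real (Suc k) * h)))\<^sup>2 * (t - real (Suc k) * h))) {real (Suc k) * h..t}"
    using sigma_bar_sq_has_integral_cell Suc.prems by blast
  have "0 \<le> real (Suc k) * h" using h by simp
  from has_integral_combine[OF this Suc.prems(1) left right]
  show ?case by (simp add: rho_grid_def field_simps)
qed

lemma rho_on_cell:
  assumes "real k * h \<le> t" "t \<le> real (Suc k) * h"
  shows "rho_bar \<sigma> h t x = rho_grid x k + (\<sigma> (x (real k * h)))\<^sup>2 * (t - real k * h)"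
  unfolding rho_bar_def using rho_has_integral[OF assms] by (rule integral_unique)

lemma rho_integrable: "t \<ge> 0 \<Longrightarrow> (\<lambda>s. (sigma_bar \<sigma> h s x)\<^sup>2) integrable_on {0..t}"
  using grid_cell_floor[OF h] rho_has_integral by blast

lemma rho_grid_eq: "rho_grid x k = rho_bar \<sigma> h (real k * h) x"
  using rho_on_cell[of k "real k * h" x] h by simp

lemma rho_increment_bounds:
  assumes "0 \<le> s" "s \<le> t"
  shows "s0 * (t - s) \<le> rho_bar \<sigma> h t x - rho_bar \<sigma> h s x \<and> rho_bar \<sigma> h t x - rho_bar \<sigma> h s x \<le> s1 * (t - s)"
proof -
  let ?f = "\<lambda>u. (sigma_bar \<sigma> h u x)\<^sup>2"
  have f_bounds: "0 \<le> ?f u" "?f u \<le> s1" "u > 0 \<Longrightarrow> s0 \<le> ?f u" for u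
    using sigma_sq_bounds s1_pos by (auto simp: sigma_bar_def)
  have int_t: "?f integrable_on {0..t}" using rho_integrable assms by simp
  have int_st: "?f integrable_on {s..t}" using integrable_subinterval_real[OF int_t] assms by auto
  have diff: "rho_bar \<sigma> h t x - rho_bar \<sigma> h s x = integral {s..t} ?f"
    using Henstock_Kurzweil_Integration.integral_combine[OF assms int_t] unfolding rho_bar_def by simp
  have upper: "integral {s..t} ?f \<le> integral {s..t} (\<lambda>_. s1)"
    by (rule integral_le[OF int_st]) (auto simp: f_bounds)
  \<comment> \<open>the lower bound \<open>s0\<close> fails only at the null set \<open>{0}\<close>, where the integrand may be modified\<close>
  define g where "g u = max s0 (?f u)" for u
  have g_eq: "g u = ?f u" if "u \<in> {s..t} - {0}" for u
    using that f_bounds(3)[of u] assms unfolding g_def by auto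
  have "integral {s..t} (\<lambda>_. s0) \<le> integral {s..t} g"
    by (rule integral_le[OF _ integrable_spike[OF int_st negligible_sing g_eq]]) (auto simp: g_def)
  also have "\<dots> = integral {s..t} ?f"
    by (rule integral_spike[OF negligible_sing g_eq, symmetric])
  finally show ?thesis using upper diff assms by (simp add: mult.commute)
qed

lemma rho_zero: "rho_bar \<sigma> h 0 x = 0"
  unfolding rho_bar_def by simp

lemma rho_strict_mono: "0 \<le> s \<Longrightarrow> s < t \<Longrightarrow> rho_bar \<sigma> h s x < rho_bar \<sigma> h t x"
  using rho_increment_bounds[of s t x] s0 by (smt (verit) mult_pos_pos)

lemma rho_mono: "0 \<le> s \<Longrightarrow> s \<le> t \<Longrightarrow> rho_bar \<sigma> h s x \<le> rho_bar \<sigma> h t x"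
  using rho_strict_mono[of s t x] by (cases "s = t") auto

lemma rho_nonneg: "0 \<le> t \<Longrightarrow> 0 \<le> rho_bar \<sigma> h t x"
  using rho_mono[of 0 t x] by (simp add: rho_zero)

lemma rho_cont: "continuous_on {0..} (\<lambda>t. rho_bar \<sigma> h t x)"
proof (rule continuous_on_from_increments[of s1])
  fix u v :: real assume "0 \<le> u" "u \<le> v"
  then show "0 \<le> rho_bar \<sigma> h v x - rho_bar \<sigma> h u x \<and> rho_bar \<sigma> h v x - rho_bar \<sigma> h u x \<le> s1 * (v - u)"
    using rho_mono[of u v x] rho_increment_bounds[of u v x] by simp
qed (use s1_pos in simp)

text \<open>\<open>tau_bar(u)\<close> is the unique time at which the clock reaches \<open>u\<close>; it exists by the
  intermediate value theorem since \<open>rho_bar(t) \<ge> s0 t\<close>.\<close>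

lemma tau_characterisation:
  assumes u: "u \<ge> 0"
  shows "\<exists>t0. 0 \<le> t0 \<and> rho_bar \<sigma> h t0 x = u \<and> tau_bar \<sigma> h u x = t0 \<and>
           (\<forall>t\<ge>0. t0 \<le> t \<longleftrightarrow> u \<le> rho_bar \<sigma> h t x)"
proof -
  have "u \<le> rho_bar \<sigma> h (u / s0) x"
    using rho_increment_bounds[of 0 "u / s0" x] u s0 by (simp add: rho_zero)
  moreover have "continuous_on {0..u/s0} (\<lambda>t. rho_bar \<sigma> h t x)"
    using rho_cont by (rule continuous_on_subset) auto
  ultimately obtain t0 where t0: "0 \<le> t0" "rho_bar \<sigma> h t0 x = u"
    using IVT'[of "\<lambda>t. rho_bar \<sigma> h t x" 0 u "u/s0"] u s0 by (auto simp: rho_zero)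
  have iff: "t0 \<le> t \<longleftrightarrow> u \<le> rho_bar \<sigma> h t x" if "t \<ge> 0" for t
    using rho_mono[of t0 t x] rho_strict_mono[of t t0 x] t0 that by force
  have "{t. 0 \<le> t \<and> u \<le> rho_bar \<sigma> h t x} = {t0..}"
  proof (rule set_eqI)
    fix t show "t \<in> {t. 0 \<le> t \<and> u \<le> rho_bar \<sigma> h t x} \<longleftrightarrow> t \<in> {t0..}"
      using iff[of t] t0(1) by auto
  qed
  then have "tau_bar \<sigma> h u x = t0" unfolding tau_bar_def by simp
  then show ?thesis using t0 iff by blast
qed

lemma tau_le_iff: "0 \<le> u \<Longrightarrow> 0 \<le> t \<Longrightarrow> tau_bar \<sigma> h u x \<le> t \<longleftrightarrow> u \<le> rho_bar \<sigma> h t x"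
  using tau_characterisation by metis

lemma tau_nonneg: "0 \<le> u \<Longrightarrow> 0 \<le> tau_bar \<sigma> h u x"
  using tau_characterisation by metis

lemma rho_tau: "0 \<le> u \<Longrightarrow> rho_bar \<sigma> h (tau_bar \<sigma> h u x) x = u"
  using tau_characterisation by metis

lemma tau_rho:
  assumes t: "0 \<le> t" shows "tau_bar \<sigma> h (rho_bar \<sigma> h t x) x = t"
proof -
  let ?t0 = "tau_bar \<sigma> h (rho_bar \<sigma> h t x) x"
  have t0: "0 \<le> ?t0" "rho_bar \<sigma> h ?t0 x = rho_bar \<sigma> h t x"
    using tau_nonneg rho_tau rho_nonneg[OF t] by auto
  then show ?thesis using rho_strict_mono[of ?t0 t x] rho_strict_mono[of t ?t0 x] t by force
qed

lemma tau_increment_bounds: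
  assumes "0 \<le> u" "u \<le> v"
  shows "(v - u) / s1 \<le> tau_bar \<sigma> h v x - tau_bar \<sigma> h u x \<and> tau_bar \<sigma> h v x - tau_bar \<sigma> h u x \<le> (v - u) / s0"
proof -
  let ?a = "tau_bar \<sigma> h u x" and ?b = "tau_bar \<sigma> h v x"
  have a0: "0 \<le> ?a" using tau_nonneg assms by simp
  have ab: "?a \<le> ?b" using tau_le_iff[of u ?b x] rho_tau[of v x] assms tau_nonneg[of v x] by simp
  have "s0 * (?b - ?a) \<le> v - u \<and> v - u \<le> s1 * (?b - ?a)"
    using rho_increment_bounds[OF a0 ab, of x] rho_tau[of u x] rho_tau[of v x] assms by simp
  then show ?thesis using s0 s1_pos by (simp add: field_simps)
qed

lemma tau_cont: "continuous_on {0..} (\<lambda>u. tau_bar \<sigma> h u x)"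
proof (rule continuous_on_from_increments[of "1 / s0"])
  fix u v :: real assume uv: "0 \<le> u" "u \<le> v"
  then have "0 \<le> (v - u) / s1" using s1_pos by simp
  then show "0 \<le> tau_bar \<sigma> h v x - tau_bar \<sigma> h u x \<and> tau_bar \<sigma> h v x - tau_bar \<sigma> h u x \<le> 1 / s0 * (v - u)"
    using tau_increment_bounds[OF uv, of x] by simp
qed (use s0 in simp)

lemma A_grid_point: "A_bar \<sigma> h (real i * h) y = A_grid \<sigma> h y i"
proof (cases i)
  case (Suc j)
  have "real i * h / h = real i" using h by simp
  then have "\<lceil>real i * h / h\<rceil> = int i" by simp
  then have "nat \<lceil>real i * h / h\<rceil> - 1 = j" using Suc by simp
  moreover have "\<not> real i * h \<le> 0" using Suc h by (simp add: not_le del: of_nat_Suc)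
  ultimately show ?thesis using Suc by (simp add: A_bar_def Let_def algebra_simps)
qed (simp add: A_bar_def)

lemma A_on_cell:
  assumes "real k * h \<le> t" "t \<le> real (Suc k) * h"
  shows "A_bar \<sigma> h t y = A_grid \<sigma> h y k + (\<sigma> (y (A_grid \<sigma> h y k)))\<^sup>2 * (t - real k * h)"
proof (cases "t = real k * h")
  case False
  then have lt: "real k * h < t" using assms by simp
  moreover have "0 \<le> real k * h" using h by simp
  ultimately have "\<not> t \<le> 0" by linarith
  then show ?thesis using grid_cell_index[OF h lt assms(2)] by (simp add: A_bar_def Let_def)
qed (simp add: A_grid_point)

abbreviation phi :: "(real \<Rightarrow> real) \<Rightarrow> real \<Rightarrow> real" where
  "phi \<equiv> time_change \<sigma> h"

definition psi :: "(real \<Rightarrow> real) \<Rightarrow> real \<Rightarrow> real" where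
  "psi y = (\<lambda>t\<in>{0..}. y (A_bar \<sigma> h t y))"

lemma phi_apply: "0 \<le> u \<Longrightarrow> phi x u = x (tau_bar \<sigma> h u x)"
  by (simp add: time_change_def)

lemma psi_apply: "0 \<le> t \<Longrightarrow> psi y t = y (A_bar \<sigma> h t y)"
  by (simp add: psi_def)

lemma rho_grid_psi: "rho_grid (psi y) k = A_grid \<sigma> h y k"
proof (induction k)
  case (Suc k)
  have "psi y (real k * h) = y (A_grid \<sigma> h y k)"
    using h by (simp add: psi_def A_grid_point)
  then show ?case using Suc by (simp add: rho_grid_def)
qed (simp add: rho_grid_def)

lemma rho_psi:
  assumes t: "0 \<le> t" shows "rho_bar \<sigma> h t (psi y) = A_bar \<sigma> h t y"
proof -
  define k where "k = nat \<lfloor>t / h\<rfloor>"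
  have cell: "real k * h \<le> t" "t \<le> real (Suc k) * h" using grid_cell_floor[OF h t] unfolding k_def by auto
  have "psi y (real k * h) = y (A_grid \<sigma> h y k)"
    using h by (simp add: psi_def A_grid_point)
  then show ?thesis using rho_on_cell[OF cell] A_on_cell[OF cell] rho_grid_psi by simp
qed

lemma A_grid_phi: "A_grid \<sigma> h (phi x) k = rho_grid x k"
proof (induction k)
  case (Suc k)
  have "0 \<le> rho_bar \<sigma> h (real k * h) x" using rho_nonneg h by simp
  then have "phi x (A_grid \<sigma> h (phi x) k) = x (real k * h)"
    using Suc h by (simp add: phi_apply rho_grid_eq tau_rho)
  then show ?case using Suc by (simp add: rho_grid_def)
qed (simp add: rho_grid_def)

lemma A_phi:
  assumes t: "0 \<le> t" shows "A_bar \<sigma> h t (phi x) = rho_bar \<sigma> h t x"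
proof -
  define k where "k = nat \<lfloor>t / h\<rfloor>"
  have cell: "real k * h \<le> t" "t \<le> real (Suc k) * h" using grid_cell_floor[OF h t] unfolding k_def by auto
  have "0 \<le> rho_bar \<sigma> h (real k * h) x" using rho_nonneg h by simp
  then have "phi x (A_grid \<sigma> h (phi x) k) = x (real k * h)"
    using h by (simp add: phi_apply rho_grid_eq tau_rho A_grid_phi)
  then show ?thesis using rho_on_cell[OF cell] A_on_cell[OF cell] A_grid_phi by simp
qed

lemma A_nonneg: "0 \<le> t \<Longrightarrow> 0 \<le> A_bar \<sigma> h t y"
  using rho_psi rho_nonneg by metis

lemma A_mono: "0 \<le> s \<Longrightarrow> s \<le> t \<Longrightarrow> A_bar \<sigma> h s y \<le> A_bar \<sigma> h t y"
  using rho_mono[of s t "psi y"] rho_psi[of s y] rho_psi[of t y] by simp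

lemma A_upper: "0 \<le> s \<Longrightarrow> s \<le> t \<Longrightarrow> A_bar \<sigma> h t y \<le> A_bar \<sigma> h s y + s1 * (t - s)"
  using rho_increment_bounds[of s t "psi y"] rho_psi[of s y] rho_psi[of t y] by simp

lemma A_cont: "continuous_on {0..} (\<lambda>t. A_bar \<sigma> h t y)"
  using rho_cont[of "psi y"] by (rule continuous_on_cong[THEN iffD1, rotated 2]) (auto simp: rho_psi)

lemma Cspace_undefined: "x \<in> Cspace \<Longrightarrow> t < 0 \<Longrightarrow> x t = undefined"
  unfolding Cspace_def extensional_def by auto

lemma psi_phi: "x \<in> Cspace \<Longrightarrow> psi (phi x) = x"
proof
  fix t assume x: "x \<in> Cspace"
  show "psi (phi x) t = x t"
  proof (cases "0 \<le> t")
    case True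
    then show ?thesis using rho_nonneg[OF True, of x] by (simp add: psi_apply A_phi phi_apply tau_rho)
  next
    case False
    then show ?thesis using Cspace_undefined[OF x] by (simp add: psi_def)
  qed
qed

lemma phi_Cspace: "x \<in> Cspace \<Longrightarrow> phi x \<in> Cspace"
proof -
  assume x: "x \<in> Cspace"
  have "continuous_on {0..} (\<lambda>u. x (tau_bar \<sigma> h u x))"
    using x by (intro continuous_on_compose2[OF _ tau_cont]) (auto simp: Cspace_def intro: tau_nonneg)
  then have "continuous_on {0..} (phi x)"
    by (rule continuous_on_cong[THEN iffD1, rotated 2]) (auto simp: time_change_def)
  then show ?thesis by (simp add: Cspace_def time_change_def)
qed

lemma psi_Cspace: "y \<in> Cspace \<Longrightarrow> psi y \<in> Cspace"
proof -
  assume y: "y \<in> Cspace"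
  have "continuous_on {0..} (\<lambda>t. y (A_bar \<sigma> h t y))"
    using y by (intro continuous_on_compose2[OF _ A_cont]) (auto simp: Cspace_def intro: A_nonneg)
  then have "continuous_on {0..} (psi y)"
    by (rule continuous_on_cong[THEN iffD1, rotated 2]) (auto simp: psi_def)
  then show ?thesis by (simp add: Cspace_def psi_def)
qed

end

context bounded_volatility
begin

lemma sigma_sq_measurable: "g \<in> borel_measurable M \<Longrightarrow> (\<lambda>x. (\<sigma> (g x))\<^sup>2) \<in> borel_measurable M"
  by (intro borel_measurable_power borel_measurable_continuous_on[OF sigma_cont])

text \<open>The clock at a deterministic time \<open>q\<close> is a finite combination of the coordinates
  \<open>x(j h)\<close>, \<open>j h \<le> q\<close>, hence observable at any time \<open>s \<ge> q\<close>.\<close>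

lemma rho_measurable:
  assumes q: "0 \<le> q" "q \<le> s"
  shows "(\<lambda>x. rho_bar \<sigma> h q x) \<in> borel_measurable (coord_gen s)"
proof -
  define k where "k = nat \<lfloor>q / h\<rfloor>"
  have cell: "real k * h \<le> q" "q \<le> real (Suc k) * h" using grid_cell_floor[OF h q(1)] unfolding k_def by auto
  have grid_coord: "(\<lambda>x. x (real j * h)) \<in> borel_measurable (coord_gen s)" if "j \<le> k" for j
  proof (rule coord_measurable)
    have "real j * h \<le> real k * h" using that h by (simp add: mult_right_mono)
    then have "real j * h \<le> s" using cell q by linarith
    then show "real j * h \<in> {0..s}" using h by simp
  qed
  have "(\<lambda>x. (\<sigma> (x (real j * h)))\<^sup>2 * h) \<in> borel_measurable (coord_gen s)" if "j \<le> k" for j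
    by (rule borel_measurable_times[OF sigma_sq_measurable[OF grid_coord[OF that]] borel_measurable_const])
  then have "(\<lambda>x. rho_grid x k) \<in> borel_measurable (coord_gen s)"
    unfolding rho_grid_def by (intro borel_measurable_sum) auto
  moreover have "(\<lambda>x. (\<sigma> (x (real k * h)))\<^sup>2 * (q - real k * h)) \<in> borel_measurable (coord_gen s)"
    by (rule borel_measurable_times[OF sigma_sq_measurable[OF grid_coord] borel_measurable_const]) simp
  ultimately have "(\<lambda>x. rho_grid x k + (\<sigma> (x (real k * h)))\<^sup>2 * (q - real k * h)) \<in> borel_measurable (coord_gen s)"
    by (rule borel_measurable_add)
  then show ?thesis using rho_on_cell[OF cell] by simp
qed

text \<open>\<open>tau_bar(r)\<close> is a stopping time: \<open>tau_bar(r) \<le> t\<close> iff \<open>r \<le> rho_bar(t)\<close>.\<close>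

lemma tau_capped_measurable:
  assumes r: "0 \<le> r" and s: "0 \<le> s"
  shows "(\<lambda>x. min (tau_bar \<sigma> h r x) s) \<in> borel_measurable (coord_gen s)"
proof (rule borel_measurableI_le)
  fix a :: real
  consider "s \<le> a" | "0 \<le> a" "a < s" | "a < 0" by linarith
  then show "{x \<in> space (coord_gen s). min (tau_bar \<sigma> h r x) s \<le> a} \<in> sets (coord_gen s)"
  proof cases
    case 1
    then have "{x \<in> space (coord_gen s). min (tau_bar \<sigma> h r x) s \<le> a} = space (coord_gen s)" by auto
    then show ?thesis by (metis sets.top)
  next
    case 2
    have "min (tau_bar \<sigma> h r x) s \<le> a \<longleftrightarrow> r \<le> rho_bar \<sigma> h a x" for x
      using 2 tau_le_iff[OF r 2(1), of x] by (simp add: min_le_iff_disj)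
    then have "{x \<in> space (coord_gen s). min (tau_bar \<sigma> h r x) s \<le> a} =
        {x \<in> space (coord_gen s). r \<le> rho_bar \<sigma> h a x}" by simp
    also have "\<dots> \<in> sets (coord_gen s)"
      using 2 by (intro borel_measurable_le borel_measurable_const rho_measurable) auto
    finally show ?thesis .
  next
    case 3
    have "\<not> min (tau_bar \<sigma> h r x) s \<le> a" for x
      using 3 s tau_nonneg[OF r, of x] by (simp add: min_le_iff_disj)
    then have "{x \<in> space (coord_gen s). min (tau_bar \<sigma> h r x) s \<le> a} = {}" by simp
    then show ?thesis by (metis sets.empty_sets)
  qed
qed

lemma phi_coord_measurable:
  assumes r: "0 \<le> r" and s: "0 \<le> s"
  shows "(\<lambda>x. x (min (tau_bar \<sigma> h r x) s)) \<in> borel_measurable (coord_gen s)"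
  by (rule eval_at_random_time[OF tau_capped_measurable[OF r s] s]) (use s tau_nonneg[OF r] in auto)

text \<open>The grid values of \<open>A_bar(y)\<close> capped at \<open>s\<close>: they are computed by a recursion that only
  evaluates \<open>y\<close> on \<open>[0, s]\<close>, which shows that they are observable at time \<open>s\<close>.\<close>

primrec A_grid_capped :: "real \<Rightarrow> (real \<Rightarrow> real) \<Rightarrow> nat \<Rightarrow> real" where
  "A_grid_capped s y 0 = 0"
| "A_grid_capped s y (Suc i) = min s (A_grid_capped s y i + (\<sigma> (y (A_grid_capped s y i)))\<^sup>2 * h)"

text \<open>The capped recursion stays in \<open>[0, s]\<close>, agrees with \<open>min (A_grid i) s\<close> (once the clock passes
  \<open>s\<close> it stays there) and is observable at time \<open>s\<close>.\<close>

lemma A_grid_capped_range: "0 \<le> s \<Longrightarrow> 0 \<le> A_grid_capped s y i \<and> A_grid_capped s y i \<le> s"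
  by (induction i) (use h in auto)

lemma A_grid_capped_eq: "0 \<le> s \<Longrightarrow> A_grid_capped s y i = min (A_grid \<sigma> h y i) s"
proof (induction i)
  case (Suc i)
  have step: "0 \<le> (\<sigma> (y (A_grid \<sigma> h y i)))\<^sup>2 * h" using h by simp
  show ?case
  proof (cases "A_grid \<sigma> h y i \<le> s")
    case True
    then show ?thesis using Suc by (auto simp: min_def)
  next
    case False
    then have "A_grid_capped s y i = s" using Suc by simp
    moreover have "0 \<le> (\<sigma> (y s))\<^sup>2 * h" using h by simp
    ultimately show ?thesis using False step by (auto simp: min_def)
  qed
qed simp

lemma A_grid_capped_measurable: "0 \<le> s \<Longrightarrow> (\<lambda>y. A_grid_capped s y i) \<in> borel_measurable (coord_gen s)"
proof (induction i)
  case (Suc i)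
  have "(\<lambda>y. y (A_grid_capped s y i)) \<in> borel_measurable (coord_gen s)"
    by (rule eval_at_random_time[OF Suc.IH[OF Suc.prems] Suc.prems]) (use A_grid_capped_range[OF Suc.prems] in auto)
  then have "(\<lambda>y. min s (A_grid_capped s y i + (\<sigma> (y (A_grid_capped s y i)))\<^sup>2 * h)) \<in> borel_measurable (coord_gen s)"
    using Suc.IH[OF Suc.prems]
    by (intro borel_measurable_min borel_measurable_add borel_measurable_times sigma_sq_measurable) auto
  then show ?case by simp
qed simp

lemma A_capped_measurable:
  assumes r: "0 \<le> r" and s: "0 \<le> s"
  shows "(\<lambda>y. min (A_bar \<sigma> h r y) s) \<in> borel_measurable (coord_gen s)"
proof -
  define k where "k = nat \<lfloor>r / h\<rfloor>"
  have cell: "real k * h \<le> r" "r \<le> real (Suc k) * h" using grid_cell_floor[OF h r] unfolding k_def by auto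
  let ?a = "\<lambda>y. A_grid_capped s y k"
  have eq: "min (A_bar \<sigma> h r y) s = min s (?a y + (\<sigma> (y (?a y)))\<^sup>2 * (r - real k * h))" for y
  proof (cases "A_grid \<sigma> h y k \<le> s")
    case True
    then show ?thesis using A_on_cell[OF cell, of y] A_grid_capped_eq[OF s, of y k] by (auto simp: min_def)
  next
    case False
    have "0 \<le> (\<sigma> (y (A_grid \<sigma> h y k)))\<^sup>2 * (r - real k * h)" "0 \<le> (\<sigma> (y s))\<^sup>2 * (r - real k * h)"
      using cell by auto
    then show ?thesis using False A_on_cell[OF cell, of y] A_grid_capped_eq[OF s, of y k] by (auto simp: min_def)
  qed
  have "(\<lambda>y. y (?a y)) \<in> borel_measurable (coord_gen s)"
    by (rule eval_at_random_time[OF A_grid_capped_measurable[OF s] s]) (use A_grid_capped_range[OF s] in auto)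
  then have "(\<lambda>y. min s (?a y + (\<sigma> (y (?a y)))\<^sup>2 * (r - real k * h))) \<in> borel_measurable (coord_gen s)"
    using A_grid_capped_measurable[OF s]
    by (intro borel_measurable_min borel_measurable_add borel_measurable_times sigma_sq_measurable) auto
  then show ?thesis unfolding eq .
qed

lemma psi_coord_measurable:
  assumes r: "0 \<le> r" and s: "0 \<le> s"
  shows "(\<lambda>y. y (min (A_bar \<sigma> h r y) s)) \<in> borel_measurable (coord_gen s)"
  by (rule eval_at_random_time[OF A_capped_measurable[OF r s] s]) (use s A_nonneg[OF r] in auto)

text \<open>Localised adaptedness of \<open>phi\<close>: on the observable event \<open>{c \<le> rho_bar(s)}\<close> the path
  \<open>phi x\<close> up to time \<open>c\<close> only depends on \<open>x\<close> up to time \<open>tau_bar(c) \<le> s\<close>.\<close>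

lemma phi_preimage_local:
  assumes c: "0 \<le> c" and s: "0 \<le> s" and A: "A \<in> sets (coord_gen c)"
  shows "{x\<in>Cspace. c \<le> rho_bar \<sigma> h s x \<and> phi x \<in> A} \<in> sets (coord_gen s)"
proof -
  define D where "D = {x\<in>Cspace. c \<le> rho_bar \<sigma> h s x}"
  have "{x\<in>space (coord_gen s). c \<le> rho_bar \<sigma> h s x} \<in> sets (coord_gen s)"
    by (rule borel_measurable_le[OF borel_measurable_const rho_measurable[OF s order_refl]])
  then have D: "D \<in> sets (coord_gen s)" by (simp add: D_def)
  have "{x\<in>D. phi x \<in> A} \<in> sets (coord_gen s)"
  proof (rule coord_gen_pullback[OF D _ _ A])
    show "\<And>x. x \<in> D \<Longrightarrow> phi x \<in> Cspace" by (simp add: D_def phi_Cspace)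
    fix r assume r: "r \<in> {0..c}"
    show "\<exists>g\<in>borel_measurable (coord_gen s). \<forall>x\<in>D. g x = phi x r"
    proof (intro bexI ballI)
      fix x assume "x \<in> D"
      then have "r \<le> rho_bar \<sigma> h s x" using r by (simp add: D_def)
      then have "tau_bar \<sigma> h r x \<le> s" using tau_le_iff[of r s x] r s by simp
      then show "x (min (tau_bar \<sigma> h r x) s) = phi x r" using r by (simp add: phi_apply min_def)
    qed (use phi_coord_measurable r s in simp)
  qed
  moreover have "{x\<in>D. phi x \<in> A} = {x\<in>Cspace. c \<le> rho_bar \<sigma> h s x \<and> phi x \<in> A}"
    by (auto simp: D_def)
  ultimately show ?thesis by simp
qed

text \<open>Localised adaptedness of \<open>psi\<close>: on the observable event \<open>{A_bar(c) < s}\<close> the path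
  \<open>psi y\<close> up to time \<open>c\<close> only depends on \<open>y\<close> up to time \<open>s\<close>.\<close>

lemma psi_preimage_local:
  assumes c: "0 \<le> c" and s: "0 \<le> s" and A: "A \<in> sets (coord_gen c)"
  shows "{y\<in>Cspace. A_bar \<sigma> h c y < s \<and> psi y \<in> A} \<in> sets (coord_gen s)"
proof -
  define D where "D = {y\<in>Cspace. A_bar \<sigma> h c y < s}"
  have "{y\<in>space (coord_gen s). min (A_bar \<sigma> h c y) s < s} \<in> sets (coord_gen s)"
    by (rule borel_measurable_less[OF A_capped_measurable[OF c s] borel_measurable_const])
  then have D: "D \<in> sets (coord_gen s)" by (simp add: D_def min_less_iff_disj)
  have "{y\<in>D. psi y \<in> A} \<in> sets (coord_gen s)"
  proof (rule coord_gen_pullback[OF D _ _ A])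
    show "\<And>y. y \<in> D \<Longrightarrow> psi y \<in> Cspace" by (simp add: D_def psi_Cspace)
    fix r assume r: "r \<in> {0..c}"
    show "\<exists>g\<in>borel_measurable (coord_gen s). \<forall>y\<in>D. g y = psi y r"
    proof (intro bexI ballI)
      fix y assume "y \<in> D"
      then have "A_bar \<sigma> h r y \<le> s" using A_mono[of r c y] r by (simp add: D_def)
      then show "y (min (A_bar \<sigma> h r y) s) = psi y r" using r by (simp add: psi_apply min_def)
    qed (use psi_coord_measurable r s in simp)
  qed
  moreover have "{y\<in>D. psi y \<in> A} = {y\<in>Cspace. A_bar \<sigma> h c y < s \<and> psi y \<in> A}"
    by (auto simp: D_def)
  ultimately show ?thesis by simp
qed

text \<open>For \<open>A \<in> C_{A_T}\<close> and \<open>s > T\<close>, the preimage is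
  the countable union over grid levels \<open>j \<delta>\<close> of \<open>{(j+1) \<delta> \<le> rho_bar(s), phi x \<in> A \<inter> {A_T \<le> j \<delta>}}\<close>,
  where \<open>A_T(phi x) = rho_bar_T(x)\<close> and \<open>rho_bar(s) - rho_bar(T) \<ge> 2 \<delta>\<close>.\<close>

lemma phi_measurable_horizon:
  assumes T: "0 \<le> T"
  shows "phi \<in> measurable (stopped_sigma (\<lambda>x. T)) (stopped_sigma (\<lambda>y. A_bar \<sigma> h T y))"
proof (rule measurable_stopped_sigmaI[OF phi_Cspace])
  fix A assume A: "A \<in> stopped_events (\<lambda>y. A_bar \<sigma> h T y)"
  have "phi -` A \<inter> Cspace \<in> sets (canon_filtr T)"
  proof (rule canon_filtrI)
    fix s assume sT: "T < s"
    define \<delta> where "\<delta> = s0 * (s - T) / 2"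
    have \<delta>: "\<delta> > 0" using sT s0 by (simp add: \<delta>_def)
    define slice where "slice j = {y\<in>A. A_bar \<sigma> h T y \<le> real j * \<delta>}" for j :: nat
    define piece where "piece j = {x\<in>Cspace. (real j + 1) * \<delta> \<le> rho_bar \<sigma> h s x \<and> phi x \<in> slice j}"
      for j :: nat
    have pieces: "piece j \<in> sets (coord_gen s)" for j
    proof -
      have "slice j \<in> sets (coord_gen ((real j + 1) * \<delta>))"
        unfolding slice_def by (rule stopped_event_slice[OF A]) (use \<delta> in \<open>simp add: algebra_simps\<close>)
      moreover have "0 \<le> (real j + 1) * \<delta>" using \<delta> by simp
      ultimately show ?thesis unfolding piece_def using T sT by (intro phi_preimage_local) auto
    qed
    have "phi -` A \<inter> Cspace = (\<Union>j. piece j)"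
    proof (intro equalityI subsetI)
      fix x assume x: "x \<in> phi -` A \<inter> Cspace"
      obtain j :: nat where j: "rho_bar \<sigma> h T x \<le> real j * \<delta>" "(real j - 1) * \<delta> < rho_bar \<sigma> h T x"
        using nat_grid_cover[OF \<delta> rho_nonneg[OF T]] by blast
      have "(real j + 1) * \<delta> = (real j - 1) * \<delta> + 2 * \<delta>" by (simp add: algebra_simps)
      moreover have "2 * \<delta> = s0 * (s - T)" by (simp add: \<delta>_def)
      moreover have "rho_bar \<sigma> h T x + s0 * (s - T) \<le> rho_bar \<sigma> h s x"
        using rho_increment_bounds[of T s x] T sT by simp
      ultimately have "(real j + 1) * \<delta> \<le> rho_bar \<sigma> h s x" using j(2) by linarith
      then have "x \<in> piece j" using x j(1) A_phi[OF T, of x] by (simp add: piece_def slice_def)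
      then show "x \<in> (\<Union>j. piece j)" by blast
    qed (auto simp: piece_def slice_def)
    also have "\<dots> \<in> sets (coord_gen s)"
      by (rule sets.countable_UN''[OF countableI_type pieces])
    finally show "phi -` A \<inter> Cspace \<in> sets (coord_gen s)" .
  qed
  then have "phi -` A \<inter> Cspace \<in> stopped_events (\<lambda>x. T)" by (simp only: stopped_events_const)
  then show "phi -` A \<inter> Cspace \<in> sets (stopped_sigma (\<lambda>x. T))" by (rule stopped_eventsD)
qed

text \<open>For \<open>A \<in> C_T\<close>, the event
  \<open>{psi y \<in> A, A_T(y) \<le> t}\<close> is observable at every \<open>s > t\<close>: \<open>A\<close> is observable at \<open>T + \<epsilon>\<close>, and
  \<open>A_{T+\<epsilon>}(y) \<le> t + s1 \<epsilon> < s\<close> on \<open>{A_T \<le> t}\<close>.\<close>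

lemma psi_measurable_horizon:
  assumes T: "0 \<le> T"
  shows "psi \<in> measurable (stopped_sigma (\<lambda>y. A_bar \<sigma> h T y)) (stopped_sigma (\<lambda>x. T))"
proof (rule measurable_stopped_sigmaI[OF psi_Cspace])
  fix A assume "A \<in> stopped_events (\<lambda>x. T)"
  then have A: "A \<in> sets (canon_filtr T)" by (simp only: stopped_events_const)
  have "psi -` A \<inter> Cspace \<in> stopped_events (\<lambda>y. A_bar \<sigma> h T y)"
    unfolding stopped_events_def
  proof (intro CollectI allI)
    fix t
    show "{y \<in> psi -` A \<inter> Cspace. A_bar \<sigma> h T y \<le> t} \<in> sets (canon_filtr t)"
    proof (cases "0 \<le> t")
      case False
      then have "{y \<in> psi -` A \<inter> Cspace. A_bar \<sigma> h T y \<le> t} = {}"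
        using A_nonneg[OF T] by (auto simp: not_le intro: less_le_trans)
      then show ?thesis by (metis sets.empty_sets)
    next
      case t: True
      show ?thesis
      proof (rule canon_filtrI)
        fix s assume ts: "t < s"
        define \<epsilon> where "\<epsilon> = (s - t) / (2 * s1)"
        have \<epsilon>: "\<epsilon> > 0" using ts s1_pos by (simp add: \<epsilon>_def)
        have later: "A_bar \<sigma> h (T + \<epsilon>) y < s" if "A_bar \<sigma> h T y \<le> t" for y
        proof -
          have "A_bar \<sigma> h (T + \<epsilon>) y \<le> A_bar \<sigma> h T y + s1 * \<epsilon>" using A_upper[of T "T + \<epsilon>" y] T \<epsilon> by simp
          moreover have "s1 * \<epsilon> < s - t" using s1_pos ts by (simp add: \<epsilon>_def)
          ultimately show ?thesis using that by linarith
        qed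
        have "{y\<in>space (coord_gen s). min (A_bar \<sigma> h T y) s \<le> t} \<in> sets (coord_gen s)"
          by (rule borel_measurable_le[OF A_capped_measurable[OF T] borel_measurable_const]) (use t ts in simp)
        moreover have "{y\<in>space (coord_gen s). min (A_bar \<sigma> h T y) s \<le> t} = {y\<in>Cspace. A_bar \<sigma> h T y \<le> t}"
          using ts by (auto simp: min_le_iff_disj)
        moreover have "{y\<in>Cspace. A_bar \<sigma> h (T + \<epsilon>) y < s \<and> psi y \<in> A} \<in> sets (coord_gen s)"
          using A canon_filtr_subset_coord_gen[of T "T + \<epsilon>"] \<epsilon> T t ts by (intro psi_preimage_local) auto
        ultimately have "{y\<in>Cspace. A_bar \<sigma> h T y \<le> t} \<inter> {y\<in>Cspace. A_bar \<sigma> h (T + \<epsilon>) y < s \<and> psi y \<in> A}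
            \<in> sets (coord_gen s)" by simp
        moreover have "{y \<in> psi -` A \<inter> Cspace. A_bar \<sigma> h T y \<le> t} =
            {y\<in>Cspace. A_bar \<sigma> h T y \<le> t} \<inter> {y\<in>Cspace. A_bar \<sigma> h (T + \<epsilon>) y < s \<and> psi y \<in> A}"
          using later by auto
        ultimately show "{y \<in> psi -` A \<inter> Cspace. A_bar \<sigma> h T y \<le> t} \<in> sets (coord_gen s)" by simp
      qed
    qed
  qed
  then show "psi -` A \<inter> Cspace \<in> sets (stopped_sigma (\<lambda>y. A_bar \<sigma> h T y))" by (rule stopped_eventsD)
qed

text \<open>For \<open>A \<in> C_a\<close>, on \<open>{tau_a \<le> t} = {a \<le> rho_bar(t)}\<close>
  the clock at \<open>s > t\<close> exceeds \<open>a + s0 (s - t)\<close>, a level at which \<open>A\<close> is already observable.\<close>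

lemma phi_measurable_level:
  assumes a: "0 \<le> a"
  shows "phi \<in> measurable (stopped_sigma (\<lambda>x. tau_bar \<sigma> h a x)) (stopped_sigma (\<lambda>y. a))"
proof (rule measurable_stopped_sigmaI[OF phi_Cspace])
  fix A assume "A \<in> stopped_events (\<lambda>y. a)"
  then have A: "A \<in> sets (canon_filtr a)" by (simp only: stopped_events_const)
  have "phi -` A \<inter> Cspace \<in> stopped_events (\<lambda>x. tau_bar \<sigma> h a x)"
    unfolding stopped_events_def
  proof (intro CollectI allI)
    fix t
    show "{x \<in> phi -` A \<inter> Cspace. tau_bar \<sigma> h a x \<le> t} \<in> sets (canon_filtr t)"
    proof (cases "0 \<le> t")
      case False
      then have "{x \<in> phi -` A \<inter> Cspace. tau_bar \<sigma> h a x \<le> t} = {}"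
        using tau_nonneg[OF a] by (auto simp: not_le intro: less_le_trans)
      then show ?thesis by (metis sets.empty_sets)
    next
      case t: True
      show ?thesis
      proof (rule canon_filtrI)
        fix s assume ts: "t < s"
        define \<epsilon> where "\<epsilon> = s0 * (s - t)"
        have \<epsilon>: "\<epsilon> > 0" using ts s0 by (simp add: \<epsilon>_def)
        have later: "a + \<epsilon> \<le> rho_bar \<sigma> h s x" if "a \<le> rho_bar \<sigma> h t x" for x
          using rho_increment_bounds[of t s x] that t ts by (simp add: \<epsilon>_def)
        have "{x\<in>space (coord_gen s). a \<le> rho_bar \<sigma> h t x} \<in> sets (coord_gen s)"
          using t ts by (intro borel_measurable_le borel_measurable_const rho_measurable) auto
        moreover have "{x\<in>Cspace. a + \<epsilon> \<le> rho_bar \<sigma> h s x \<and> phi x \<in> A} \<in> sets (coord_gen s)"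
          using A canon_filtr_subset_coord_gen[of a "a + \<epsilon>"] \<epsilon> a t ts by (intro phi_preimage_local) auto
        ultimately have "{x\<in>Cspace. a \<le> rho_bar \<sigma> h t x} \<inter> {x\<in>Cspace. a + \<epsilon> \<le> rho_bar \<sigma> h s x \<and> phi x \<in> A}
            \<in> sets (coord_gen s)" by simp
        moreover have "{x \<in> phi -` A \<inter> Cspace. tau_bar \<sigma> h a x \<le> t} =
            {x\<in>Cspace. a \<le> rho_bar \<sigma> h t x} \<inter> {x\<in>Cspace. a + \<epsilon> \<le> rho_bar \<sigma> h s x \<and> phi x \<in> A}"
          using later tau_le_iff[OF a t] by auto
        ultimately show "{x \<in> phi -` A \<inter> Cspace. tau_bar \<sigma> h a x \<le> t} \<in> sets (coord_gen s)" by simp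
      qed
    qed
  qed
  then show "phi -` A \<inter> Cspace \<in> sets (stopped_sigma (\<lambda>x. tau_bar \<sigma> h a x))" by (rule stopped_eventsD)
qed

text \<open>For \<open>A \<in> C_{tau_a}\<close> and \<open>s > a\<close>, the preimage is the
  countable union over grid levels \<open>j \<delta>\<close> of \<open>{A_{(j+1) \<delta>}(y) < s, psi y \<in> A \<inter> {tau_a \<le> j \<delta>}}\<close>:
  at \<open>q = tau_a(psi y)\<close> the clock \<open>A_q(y)\<close> equals \<open>a\<close>, and it grows by less than \<open>s - a\<close> over
  the following \<open>2 \<delta>\<close>.\<close>

lemma psi_measurable_level:
  assumes a: "0 \<le> a"
  shows "psi \<in> measurable (stopped_sigma (\<lambda>y. a)) (stopped_sigma (\<lambda>x. tau_bar \<sigma> h a x))"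
proof (rule measurable_stopped_sigmaI[OF psi_Cspace])
  fix A assume A: "A \<in> stopped_events (\<lambda>x. tau_bar \<sigma> h a x)"
  have "psi -` A \<inter> Cspace \<in> sets (canon_filtr a)"
  proof (rule canon_filtrI)
    fix s assume sa: "a < s"
    define \<delta> where "\<delta> = (s - a) / (2 * s1)"
    have \<delta>: "\<delta> > 0" using sa s1_pos by (simp add: \<delta>_def)
    define slice where "slice j = {x\<in>A. tau_bar \<sigma> h a x \<le> real j * \<delta>}" for j :: nat
    define piece where "piece j = {y\<in>Cspace. A_bar \<sigma> h ((real j + 1) * \<delta>) y < s \<and> psi y \<in> slice j}"
      for j :: nat
    have pieces: "piece j \<in> sets (coord_gen s)" for j
    proof -
      have "slice j \<in> sets (coord_gen ((real j + 1) * \<delta>))"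
        unfolding slice_def by (rule stopped_event_slice[OF A]) (use \<delta> in \<open>simp add: algebra_simps\<close>)
      moreover have "0 \<le> (real j + 1) * \<delta>" using \<delta> by simp
      ultimately show ?thesis unfolding piece_def using a sa by (intro psi_preimage_local) auto
    qed
    have "psi -` A \<inter> Cspace = (\<Union>j. piece j)"
    proof (intro equalityI subsetI)
      fix y assume y: "y \<in> psi -` A \<inter> Cspace"
      define q where "q = tau_bar \<sigma> h a (psi y)"
      have q: "0 \<le> q" using tau_nonneg[OF a] by (simp add: q_def)
      have Aq: "A_bar \<sigma> h q y = a" using rho_psi[OF q, of y] rho_tau[OF a, of "psi y"] by (simp add: q_def)
      obtain j :: nat where j: "q \<le> real j * \<delta>" "(real j - 1) * \<delta> < q"
        using nat_grid_cover[OF \<delta> q] by blast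
      have qj: "q \<le> (real j + 1) * \<delta>" using j(1) \<delta> by (simp add: algebra_simps)
      have "A_bar \<sigma> h ((real j + 1) * \<delta>) y \<le> a + s1 * ((real j + 1) * \<delta> - q)"
        using A_upper[OF q qj, of y] Aq by simp
      also have "\<dots> < a + s1 * (2 * \<delta>)"
      proof -
        have "(real j + 1) * \<delta> - q < 2 * \<delta>" using j(2) by (simp add: algebra_simps)
        then show ?thesis using s1_pos by simp
      qed
      also have "\<dots> = s" using s1_pos by (simp add: \<delta>_def field_simps)
      finally have "x \<in> piece j" if "x = y" for x
        using that y j(1) by (simp add: piece_def slice_def q_def)
      then show "y \<in> (\<Union>j. piece j)" by blast
    qed (auto simp: piece_def slice_def)
    also have "\<dots> \<in> sets (coord_gen s)"
      by (rule sets.countable_UN''[OF countableI_type pieces])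
    finally show "psi -` A \<inter> Cspace \<in> sets (coord_gen s)" .
  qed
  then have "psi -` A \<inter> Cspace \<in> stopped_events (\<lambda>y. a)" by (simp only: stopped_events_const)
  then show "psi -` A \<inter> Cspace \<in> sets (stopped_sigma (\<lambda>y. a))" by (rule stopped_eventsD)
qed

text \<open>\<open>phi\<close> and \<open>psi\<close> are measurable maps of \<open>(C, \<B>(C))\<close>: the coordinate at time \<open>r\<close> of
  \<open>phi x\<close> (resp. \<open>psi y\<close>) only involves the path up to time \<open>r / s0\<close> (resp. \<open>s1 r\<close>).\<close>

lemma phi_measurable_Cmeas: "phi \<in> measurable Cmeas Cmeas"
proof (rule measurable_CmeasI)
  show "\<And>x. x \<in> space Cmeas \<Longrightarrow> phi x \<in> Cspace" by (simp add: phi_Cspace)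
  fix r :: real assume r: "0 \<le> r"
  define s where "s = r / s0"
  have s: "0 \<le> s" using r s0 by (simp add: s_def)
  have "r \<le> rho_bar \<sigma> h s x" for x
    using rho_increment_bounds[of 0 s x] s s0 by (simp add: rho_zero s_def)
  then have "tau_bar \<sigma> h r x \<le> s" for x using tau_le_iff[OF r s] by simp
  then have eq: "phi x r = x (min (tau_bar \<sigma> h r x) s)" for x using r by (simp add: phi_apply min_def)
  have "(\<lambda>x. x (min (tau_bar \<sigma> h r x) s)) \<in> borel_measurable Cmeas"
    by (rule measurable_from_subalg[OF coord_gen_subalgebra phi_coord_measurable[OF r s]])
  then show "(\<lambda>x. phi x r) \<in> borel_measurable Cmeas" by (simp only: eq)
qed

lemma psi_measurable_Cmeas: "psi \<in> measurable Cmeas Cmeas"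
proof (rule measurable_CmeasI)
  show "\<And>y. y \<in> space Cmeas \<Longrightarrow> psi y \<in> Cspace" by (simp add: psi_Cspace)
  fix r :: real assume r: "0 \<le> r"
  define s where "s = s1 * r"
  have s: "0 \<le> s" using r s1_pos by (simp add: s_def)
  have "A_bar \<sigma> h r y \<le> s" for y
    using A_upper[of 0 r y] r by (simp add: A_bar_def s_def)
  then have eq: "psi y r = y (min (A_bar \<sigma> h r y) s)" for y using r by (simp add: psi_apply min_def)
  have "(\<lambda>y. y (min (A_bar \<sigma> h r y) s)) \<in> borel_measurable Cmeas"
    by (rule measurable_from_subalg[OF coord_gen_subalgebra psi_coord_measurable[OF r s]])
  then show "(\<lambda>y. psi y r) \<in> borel_measurable Cmeas" by (simp only: eq)
qed

end

section \<open>The Euler scheme as a random path\<close>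

definition euler_piece :: "(real \<Rightarrow> real) \<Rightarrow> (real \<Rightarrow> real) \<Rightarrow> real \<Rightarrow> real \<Rightarrow> (real \<Rightarrow> real) \<Rightarrow> nat
    \<Rightarrow> real \<Rightarrow> real" where
  "euler_piece b \<sigma> h x0 w k t = (let y = euler_grid b \<sigma> h x0 w k
     in y + b y * (t - real k * h) + \<sigma> y * (w t - w (real k * h)))"

lemma euler_path_pos:
  "t > 0 \<Longrightarrow> euler_path b \<sigma> h x0 w t = euler_piece b \<sigma> h x0 w (nat \<lceil>t / h\<rceil> - 1) t"
  by (simp add: euler_path_def euler_piece_def Let_def)

lemma euler_piece_left: "euler_piece b \<sigma> h x0 w k (real k * h) = euler_grid b \<sigma> h x0 w k"
  by (simp add: euler_piece_def Let_def)

lemma euler_piece_right: "euler_piece b \<sigma> h x0 w k (real (Suc k) * h) = euler_grid b \<sigma> h x0 w (Suc k)"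
  by (simp add: euler_piece_def Let_def algebra_simps)

lemma euler_path_on_cell:
  assumes h: "h > 0" and t: "real k * h \<le> t" "t \<le> real (Suc k) * h"
  shows "euler_path b \<sigma> h x0 w t = euler_piece b \<sigma> h x0 w k t"
proof (cases "t = real k * h")
  case True
  show ?thesis
  proof (cases k)
    case 0
    then show ?thesis using True by (simp add: euler_path_def euler_piece_def)
  next
    case (Suc j)
    have tpos: "t > 0" using True Suc h by simp
    have "real j * h < t" "t \<le> real (Suc j) * h" using True Suc h by auto
    then have "nat \<lceil>t / h\<rceil> - 1 = j" by (rule grid_cell_index[OF h])
    then have "euler_path b \<sigma> h x0 w t = euler_piece b \<sigma> h x0 w j (real (Suc j) * h)"
      using euler_path_pos[OF tpos] True Suc by simp
    also have "\<dots> = euler_grid b \<sigma> h x0 w k" using Suc by (simp only: euler_piece_right)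
    also have "\<dots> = euler_piece b \<sigma> h x0 w k t" using True by (simp only: euler_piece_left)
    finally show ?thesis .
  qed
next
  case False
  then have lt: "real k * h < t" using t by simp
  moreover have "0 \<le> real k * h" using h by simp
  ultimately have "t > 0" by linarith
  then show ?thesis using euler_path_pos grid_cell_index[OF h lt t(2)] by simp
qed

lemma euler_path_cont:
  assumes w: "continuous_on {0..} w" and b: "continuous_on UNIV b" and h: "h > 0"
  shows "continuous_on {0..} (euler_path b \<sigma> h x0 w)"
proof -
  have piece: "continuous_on {real k * h..real (Suc k) * h} (euler_path b \<sigma> h x0 w)" for k
  proof -
    have "continuous_on {real k * h..real (Suc k) * h} w"
      using w by (rule continuous_on_subset) (use h in auto)
    then have "continuous_on {real k * h..real (Suc k) * h} (euler_piece b \<sigma> h x0 w k)"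
      unfolding euler_piece_def Let_def by (intro continuous_intros)
    then show ?thesis
      by (rule continuous_on_cong[THEN iffD1, rotated 2]) (auto simp: euler_path_on_cell[OF h])
  qed
  have upto: "continuous_on {0..real N * h} (euler_path b \<sigma> h x0 w)" for N
  proof (induction N)
    case (Suc N)
    have "0 \<le> real N * h" "real N * h \<le> real (Suc N) * h" using h by auto
    then have "{0..real N * h} \<union> {real N * h..real (Suc N) * h} = {0..real (Suc N) * h}"
      by auto
    moreover have "continuous_on ({0..real N * h} \<union> {real N * h..real (Suc N) * h}) (euler_path b \<sigma> h x0 w)"
      by (rule continuous_on_closed_Un[OF _ _ Suc.IH piece]) auto
    ultimately show ?case by simp
  qed simp
  show ?thesis
    unfolding continuous_on_eq_continuous_within
  proof
    fix t :: real assume t: "t \<in> {0..}"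
    obtain N :: nat where "t / h < real N" using reals_Archimedean2 by blast
    then have tN: "t < real N * h" using h by (simp add: field_simps)
    have "continuous (at t within {0..real N * h}) (euler_path b \<sigma> h x0 w)"
      using upto[of N] t tN unfolding continuous_on_eq_continuous_within by auto
    moreover have "at t within {0..} = at t within {0..real N * h}"
      by (rule at_within_nhd[of _ "{..<real N * h}"]) (use tN in auto)
    ultimately show "continuous (at t within {0..}) (euler_path b \<sigma> h x0 w)" by simp
  qed
qed

lemma euler_grid_measurable:
  assumes b: "continuous_on UNIV b" and s: "continuous_on UNIV \<sigma>"
    and eta: "\<eta> \<in> borel_measurable M" and W: "\<And>t. t \<ge> 0 \<Longrightarrow> (\<lambda>\<omega>. W t \<omega>) \<in> borel_measurable M"
    and h: "h > 0"
  shows "(\<lambda>\<omega>. euler_grid b \<sigma> h (\<eta> \<omega>) (\<lambda>t. W t \<omega>) i) \<in> borel_measurable M"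
proof (induction i)
  case (Suc i)
  let ?y = "\<lambda>\<omega>. euler_grid b \<sigma> h (\<eta> \<omega>) (\<lambda>t. W t \<omega>) i"
  have "(\<lambda>\<omega>. ?y \<omega> + b (?y \<omega>) * h + \<sigma> (?y \<omega>) * (W (real (Suc i) * h) \<omega> - W (real i * h) \<omega>))
      \<in> borel_measurable M"
    using h by (intro borel_measurable_add borel_measurable_times borel_measurable_diff
        borel_measurable_continuous_on[OF b] borel_measurable_continuous_on[OF s] Suc W borel_measurable_const) auto
  then show ?case by (simp add: Let_def)
qed (simp add: eta)

lemma euler_path_measurable:
  assumes b: "continuous_on UNIV b" and s: "continuous_on UNIV \<sigma>"
    and eta: "\<eta> \<in> borel_measurable M" and W: "\<And>t. t \<ge> 0 \<Longrightarrow> (\<lambda>\<omega>. W t \<omega>) \<in> borel_measurable M"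
    and W_cont: "\<And>\<omega>. \<omega> \<in> space M \<Longrightarrow> continuous_on {0..} (\<lambda>t. W t \<omega>)"
    and h: "h > 0"
  shows "(\<lambda>\<omega>. euler_path b \<sigma> h (\<eta> \<omega>) (\<lambda>t. W t \<omega>)) \<in> measurable M Cmeas"
proof (rule measurable_CmeasI)
  show "euler_path b \<sigma> h (\<eta> \<omega>) (\<lambda>t. W t \<omega>) \<in> Cspace" if "\<omega> \<in> space M" for \<omega>
    using euler_path_cont[OF W_cont[OF that] b h] by (simp add: Cspace_def euler_path_def)
  fix r :: real assume r: "0 \<le> r"
  show "(\<lambda>\<omega>. euler_path b \<sigma> h (\<eta> \<omega>) (\<lambda>t. W t \<omega>) r) \<in> borel_measurable M"
  proof (cases "r = 0")
    case True
    then show ?thesis using eta by (simp add: euler_path_def)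
  next
    case False
    let ?k = "nat \<lceil>r / h\<rceil> - 1"
    let ?y = "\<lambda>\<omega>. euler_grid b \<sigma> h (\<eta> \<omega>) (\<lambda>t. W t \<omega>) ?k"
    have "(\<lambda>\<omega>. ?y \<omega> + b (?y \<omega>) * (r - real ?k * h) + \<sigma> (?y \<omega>) * (W r \<omega> - W (real ?k * h) \<omega>))
        \<in> borel_measurable M"
      using h r by (intro borel_measurable_add borel_measurable_times borel_measurable_diff
          borel_measurable_continuous_on[OF b] borel_measurable_continuous_on[OF s] W
          euler_grid_measurable[OF b s eta W h] borel_measurable_const) auto
    then show ?thesis using False r by (simp add: euler_path_def Let_def)
  qed
qed

text \<open>The coordinates of a Brownian motion are random variables: \<open>W_t = W_t - W_0\<close> has a
  (Gaussian) distribution.\<close>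

lemma brownian_motion_measurable:
  assumes BM: "brownian_motion M W" and t: "0 \<le> t"
  shows "(\<lambda>\<omega>. W t \<omega>) \<in> borel_measurable M"
proof -
  have W0: "\<forall>\<omega>\<in>space M. W 0 \<omega> = 0" using BM by (simp add: brownian_motion_def)
  show ?thesis
  proof (cases "t = 0")
    case True
    then show ?thesis using W0 by (intro measurable_cong[THEN iffD2, OF _ borel_measurable_const[of 0]]) auto
  next
    case False
    then have "0 < t" using t by simp
    then have "distributed M lborel (\<lambda>\<omega>. W t \<omega> - W 0 \<omega>) (normal_density 0 (sqrt (t - 0)))"
      using BM unfolding brownian_motion_def by blast
    then have "(\<lambda>\<omega>. W t \<omega> - W 0 \<omega>) \<in> borel_measurable M"
      using distributed_measurable by fastforce
    then show ?thesis by (rule measurable_cong[THEN iffD1, rotated]) (use W0 in auto)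
  qed
qed

lemma euler_measurable:
  assumes BM: "brownian_motion M W" and eta: "\<eta> \<in> borel_measurable M"
    and b: "continuous_on UNIV b" and s: "continuous_on UNIV \<sigma>" and h: "h > 0"
  shows "(\<lambda>\<omega>. euler_path b \<sigma> h (\<eta> \<omega>) (\<lambda>t. W t \<omega>)) \<in> measurable M Cmeas"
  using BM by (intro euler_path_measurable[OF b s eta brownian_motion_measurable[OF BM] _ h])
    (auto simp: brownian_motion_def)

lemma euler_law_prob_space:
  assumes BM: "brownian_motion M W" and eta: "\<eta> \<in> borel_measurable M"
    and b: "continuous_on UNIV b" and s: "continuous_on UNIV \<sigma>" and h: "h > 0"
  shows "prob_space (Q_law M W \<eta> \<sigma> h b) \<and> sets (Q_law M W \<eta> \<sigma> h b) = sets Cmeas"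
proof -
  have "prob_space M" using BM by (simp add: brownian_motion_def)
  then show ?thesis
    unfolding Q_law_def using prob_space.prob_space_distr[OF _ euler_measurable[OF assms]] by simp
qed

lemma (in bounded_volatility) time_changed_law:
  assumes BM: "brownian_motion M W" and eta: "\<eta> \<in> borel_measurable M" and b: "continuous_on UNIV b"
  shows "Qt_law M W \<eta> \<sigma> h b = distr (Q_law M W \<eta> \<sigma> h b) Cmeas phi"
  unfolding Q_law_def Qt_law_def
  using distr_distr[OF phi_measurable_Cmeas euler_measurable[OF BM eta b sigma_cont h]] by (simp add: comp_def)

section \<open>Experiments that are images of each other\<close>

lemma tv_dist_le_1:
  assumes "prob_space X" "prob_space Y"
  shows "tv_dist X Y \<le> 1"
  unfolding tv_dist_def
proof (rule cSUP_least)
  show "sets X \<noteq> {}" using sets.empty_sets[of X] by blast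
  fix A
  have "0 \<le> measure X A" "measure X A \<le> 1" "0 \<le> measure Y A" "measure Y A \<le> 1"
    using prob_space.prob_le_1[OF assms(1)] prob_space.prob_le_1[OF assms(2)] by auto
  then show "\<bar>measure X A - measure Y A\<bar> \<le> 1" by linarith
qed

lemma tv_dist_self: "tv_dist X X = 0"
proof -
  have "sets X \<noteq> {}" using sets.empty_sets[of X] by blast
  then show ?thesis unfolding tv_dist_def by simp
qed

text \<open>If a measurable map \<open>g\<close> carries every \<open>P_\<theta>\<close> onto \<open>Q_\<theta>\<close>, the deterministic kernel
  \<open>x \<mapsto> \<delta>_{g x}\<close> reproduces \<open>Q\<close> exactly, so the deficiency is \<open>0\<close> (it is nonnegative since
  \<open>0\<close> is included in every supremum).\<close>

lemma deficiency_zero: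
  assumes P: "\<And>\<theta>. \<theta> \<in> \<Theta> \<Longrightarrow> prob_space (P \<theta>) \<and> sets (P \<theta>) = sets E"
    and Q: "\<And>\<theta>. \<theta> \<in> \<Theta> \<Longrightarrow> prob_space (Q \<theta>)"
    and g: "g \<in> measurable E G"
    and image: "\<And>\<theta>. \<theta> \<in> \<Theta> \<Longrightarrow> distr (P \<theta>) G g = Q \<theta>"
  shows "deficiency E P G Q \<Theta> = 0"
  unfolding deficiency_def
proof (rule cInf_eq_minimum)
  define K0 where "K0 = (\<lambda>x. return G (g x))"
  have K0: "K0 \<in> measurable E (prob_algebra G)"
    unfolding K0_def by (rule measurable_compose[OF g measurable_return_prob_space])
  have "tv_dist (bind (P \<theta>) K0) (Q \<theta>) = 0" if th: "\<theta> \<in> \<Theta>" for \<theta>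
  proof -
    have "space (P \<theta>) \<noteq> {}" using P[OF th] prob_space.not_empty by blast
    moreover have "g \<in> measurable (P \<theta>) G" using g P[OF th] by (simp cong: measurable_cong_sets)
    ultimately have "bind (P \<theta>) K0 = distr (P \<theta>) G g" unfolding K0_def by (rule bind_return_distr')
    then show ?thesis using image[OF th] tv_dist_self by simp
  qed
  then have only0: "insert 0 ((\<lambda>\<theta>. tv_dist (bind (P \<theta>) K0) (Q \<theta>)) ` \<Theta>) = {0}" by auto
  show "0 \<in> (\<lambda>K. Sup (insert 0 ((\<lambda>\<theta>. tv_dist (bind (P \<theta>) K) (Q \<theta>)) ` \<Theta>))) ` measurable E (prob_algebra G)"
  proof (rule image_eqI[of _ _ K0])
    show "0 = Sup (insert 0 ((\<lambda>\<theta>. tv_dist (bind (P \<theta>) K0) (Q \<theta>)) ` \<Theta>))" unfolding only0 by simp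
  qed (rule K0)
  fix y assume "y \<in> (\<lambda>K. Sup (insert 0 ((\<lambda>\<theta>. tv_dist (bind (P \<theta>) K) (Q \<theta>)) ` \<Theta>))) ` measurable E (prob_algebra G)"
  then obtain K where K: "K \<in> measurable E (prob_algebra G)"
    and y: "y = Sup (insert 0 ((\<lambda>\<theta>. tv_dist (bind (P \<theta>) K) (Q \<theta>)) ` \<Theta>))" by blast
  have "tv_dist (bind (P \<theta>) K) (Q \<theta>) \<le> 1" if th: "\<theta> \<in> \<Theta>" for \<theta>
  proof (rule tv_dist_le_1[OF _ Q[OF th]])
    have "P \<theta> \<in> space (prob_algebra E)" using P[OF th] by (simp add: space_prob_algebra)
    then show "prob_space (bind (P \<theta>) K)" by (rule prob_space_bind'[OF _ K])
  qed
  then have "bdd_above (insert 0 ((\<lambda>\<theta>. tv_dist (bind (P \<theta>) K) (Q \<theta>)) ` \<Theta>))"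
    by (intro bdd_aboveI[of _ 1]) auto
  then show "0 \<le> y" unfolding y by (rule cSup_upper[rotated]) simp
qed

lemma distr_restr_to_subalg:
  assumes E: "subalgebra M E" and G: "subalgebra N G"
    and f: "f \<in> measurable M N" and fE: "f \<in> measurable E G"
  shows "distr (restr_to_subalg M E) G f = restr_to_subalg (distr M N f) G"
proof (rule measure_eqI)
  have G': "subalgebra (distr M N f) G" using G by (simp add: subalgebra_def)
  then show "sets (distr (restr_to_subalg M E) G f) = sets (restr_to_subalg (distr M N f) G)"
    by (simp add: sets_restr_to_subalg)
  fix A assume "A \<in> sets (distr (restr_to_subalg M E) G f)"
  then have A: "A \<in> sets G" by simp
  then have AN: "A \<in> sets N" using G by (auto simp: subalgebra_def)
  have pre: "f -` A \<inter> space M \<in> sets E" using measurable_sets[OF fE A] E by (simp add: subalgebra_def)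
  have "emeasure (distr (restr_to_subalg M E) G f) A = emeasure (restr_to_subalg M E) (f -` A \<inter> space M)"
    using emeasure_distr[OF measurable_in_subalg[OF E fE] A] by (simp add: space_restr_to_subalg)
  also have "\<dots> = emeasure M (f -` A \<inter> space M)" by (rule emeasure_restr_to_subalg[OF E pre])
  also have "\<dots> = emeasure (distr M N f) A" using emeasure_distr[OF f AN] by simp
  also have "\<dots> = emeasure (restr_to_subalg (distr M N f) G) A"
    by (rule emeasure_restr_to_subalg[OF G' A, symmetric])
  finally show "emeasure (distr (restr_to_subalg M E) G f) A = emeasure (restr_to_subalg (distr M N f) G) A" .
qed

lemma le_cam_dist_zero_transport:
  assumes Q: "\<And>\<theta>. \<theta> \<in> \<Theta> \<Longrightarrow> prob_space (Q \<theta>) \<and> sets (Q \<theta>) = sets X"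
    and Qt: "\<And>\<theta>. \<theta> \<in> \<Theta> \<Longrightarrow> Qt \<theta> = distr (Q \<theta>) X phi"
    and E: "subalgebra X E" and G: "subalgebra X G"
    and phi: "phi \<in> measurable X X" and phiE: "phi \<in> measurable E G"
    and psi: "psi \<in> measurable X X" and psiG: "psi \<in> measurable G E"
    and inverse: "\<And>x. x \<in> space X \<Longrightarrow> psi (phi x) = x"
  shows "le_cam_dist E (\<lambda>\<theta>. restr_to_subalg (Q \<theta>) E) G (\<lambda>\<theta>. restr_to_subalg (Qt \<theta>) G) \<Theta> = 0"
proof -
  have subalg: "subalgebra M F" if "subalgebra X F" "sets M = sets X" for M F
    using that sets_eq_imp_space_eq[OF that(2)] by (simp add: subalgebra_def)
  have phiQ: "phi \<in> measurable (Q \<theta>) X" if "\<theta> \<in> \<Theta>" for \<theta>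
    using phi Q[OF that] by (simp cong: measurable_cong_sets)
  have Qt_law: "prob_space (Qt \<theta>) \<and> sets (Qt \<theta>) = sets X" if th: "\<theta> \<in> \<Theta>" for \<theta>
    using prob_space.prob_space_distr[OF conjunct1[OF Q[OF th]] phiQ[OF th]] Qt[OF th] by simp
  have restr: "prob_space (restr_to_subalg M F) \<and> sets (restr_to_subalg M F) = sets F"
    if "prob_space M \<and> sets M = sets X" "subalgebra X F" for M F
    using that subalg[of F M] prob_space_restr_to_subalg sets_restr_to_subalg by blast
  have forward: "distr (restr_to_subalg (Q \<theta>) E) G phi = restr_to_subalg (Qt \<theta>) G" if th: "\<theta> \<in> \<Theta>" for \<theta>
    using distr_restr_to_subalg[OF subalg[OF E] G phiQ[OF th] phiE] Q[OF th] Qt[OF th] by simp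
  have backward: "distr (restr_to_subalg (Qt \<theta>) G) E psi = restr_to_subalg (Q \<theta>) E" if th: "\<theta> \<in> \<Theta>" for \<theta>
  proof -
    have psiQt: "psi \<in> measurable (Qt \<theta>) X" using psi Qt_law[OF th] by (simp cong: measurable_cong_sets)
    have "distr (Qt \<theta>) X psi = distr (Q \<theta>) X (psi \<circ> phi)"
      using distr_distr[OF psi phiQ[OF th]] Qt[OF th] by simp
    also have "\<dots> = distr (Q \<theta>) X (\<lambda>x. x)"
      using inverse sets_eq_imp_space_eq[of "Q \<theta>" X] Q[OF th] by (intro distr_cong) auto
    also have "\<dots> = Q \<theta>" using Q[OF th] by (intro distr_id2) simp
    finally have "distr (Qt \<theta>) X psi = Q \<theta>" .
    then show ?thesis
      using distr_restr_to_subalg[OF subalg[OF G] E psiQt psiG] Qt_law[OF th] by simp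
  qed
  have "deficiency E (\<lambda>\<theta>. restr_to_subalg (Q \<theta>) E) G (\<lambda>\<theta>. restr_to_subalg (Qt \<theta>) G) \<Theta> = 0"
    using restr[OF Q E] restr[OF Qt_law G] forward by (intro deficiency_zero[OF _ _ phiE]) auto
  moreover have "deficiency G (\<lambda>\<theta>. restr_to_subalg (Qt \<theta>) G) E (\<lambda>\<theta>. restr_to_subalg (Q \<theta>) E) \<Theta> = 0"
    using restr[OF Q E] restr[OF Qt_law G] backward by (intro deficiency_zero[OF _ _ psiG]) auto
  ultimately show ?thesis unfolding le_cam_dist_def by simp
qed

theorem theorem2:
  fixes M :: "'w measure" and W :: "real \<Rightarrow> 'w \<Rightarrow> real" and \<eta> :: "'w \<Rightarrow> real"
    and \<sigma> :: "real \<Rightarrow> real" and \<sigma>\<^sub>0 \<sigma>\<^sub>1 K\<^sub>\<sigma> K h a T :: real and n :: nat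
  assumes C_smooth: "\<forall>x. \<sigma> differentiable at x" "\<forall>x. deriv \<sigma> differentiable at x"
      "continuous_on UNIV (deriv (deriv \<sigma>))"
    and C_bounds: "0 < \<sigma>\<^sub>0\<^sup>2" "\<forall>x. \<sigma>\<^sub>0\<^sup>2 \<le> (\<sigma> x)\<^sup>2 \<and> (\<sigma> x)\<^sup>2 \<le> \<sigma>\<^sub>1\<^sup>2"
      "\<forall>x. \<bar>deriv \<sigma> x\<bar> + \<bar>deriv (deriv \<sigma>) x\<bar> \<le> K\<^sub>\<sigma>"
    and BM: "brownian_motion M W"
    and eta: "\<eta> \<in> borel_measurable M"
      "prob_space.indep_set M
         (sigma_sets (space M) {\<eta> -` B \<inter> space M | B. B \<in> sets borel})
         (sigma_sets (space M) {(\<lambda>\<omega>. W t \<omega>) -` B \<inter> space M | t B. 0 \<le> t \<and> B \<in> sets borel})"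
    and h: "h > 0" and n: "n \<ge> 1" and T: "T = real n * h" and a: "a > 0"
  shows "le_cam_dist
           (stopped_sigma (\<lambda>x. T))
           (\<lambda>b. restr_to_subalg (Q_law M W \<eta> \<sigma> h b) (stopped_sigma (\<lambda>x. T)))
           (stopped_sigma (\<lambda>y. A_bar \<sigma> h T y))
           (\<lambda>b. restr_to_subalg (Qt_law M W \<eta> \<sigma> h b) (stopped_sigma (\<lambda>y. A_bar \<sigma> h T y)))
           (FK K) = 0
       \<and> le_cam_dist
           (stopped_sigma (\<lambda>x. tau_bar \<sigma> h a x))
           (\<lambda>b. restr_to_subalg (Q_law M W \<eta> \<sigma> h b) (stopped_sigma (\<lambda>x. tau_bar \<sigma> h a x)))
           (stopped_sigma (\<lambda>y. a))
           (\<lambda>b. restr_to_subalg (Qt_law M W \<eta> \<sigma> h b) (stopped_sigma (\<lambda>y. a)))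
           (FK K) = 0"
proof -
  have sigma_cont: "continuous_on UNIV \<sigma>"
    using C_smooth(1) by (intro continuous_at_imp_continuous_on) (auto intro: differentiable_imp_continuous_within)
  interpret bounded_volatility \<sigma> h "\<sigma>\<^sub>0\<^sup>2" "\<sigma>\<^sub>1\<^sup>2"
    by unfold_locales (use h C_bounds sigma_cont in auto)
  have b_cont: "continuous_on UNIV b" if "b \<in> FK K" for b
    using that unfolding FK_def
    by (intro continuous_at_imp_continuous_on) (auto intro: differentiable_imp_continuous_within)
  have Q: "prob_space (Q_law M W \<eta> \<sigma> h b) \<and> sets (Q_law M W \<eta> \<sigma> h b) = sets Cmeas"
    if "b \<in> FK K" for b
    by (rule euler_law_prob_space[OF BM eta(1) b_cont[OF that] sigma_cont h])
  have Qt: "Qt_law M W \<eta> \<sigma> h b = distr (Q_law M W \<eta> \<sigma> h b) Cmeas phi" if "b \<in> FK K" for b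
    by (rule time_changed_law[OF BM eta(1) b_cont[OF that]])
  have inverse: "psi (phi x) = x" if "x \<in> space Cmeas" for x
    using that psi_phi by simp
  have transport: "le_cam_dist E (\<lambda>b. restr_to_subalg (Q_law M W \<eta> \<sigma> h b) E)
      G (\<lambda>b. restr_to_subalg (Qt_law M W \<eta> \<sigma> h b) G) (FK K) = 0"
    if "phi \<in> measurable E G" "psi \<in> measurable G E" "subalgebra Cmeas E" "subalgebra Cmeas G" for E G
  proof (rule le_cam_dist_zero_transport)
    show "\<And>b. b \<in> FK K \<Longrightarrow> prob_space (Q_law M W \<eta> \<sigma> h b) \<and> sets (Q_law M W \<eta> \<sigma> h b) = sets Cmeas"
      by (rule Q)
  qed (fact Qt that phi_measurable_Cmeas psi_measurable_Cmeas inverse)+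
  have T0: "0 \<le> T" using T h by simp
  have a0: "0 \<le> a" using a by simp
  show ?thesis
    using transport[OF phi_measurable_horizon[OF T0] psi_measurable_horizon[OF T0]
        stopped_sigma_subalgebra stopped_sigma_subalgebra]
      transport[OF phi_measurable_level[OF a0] psi_measurable_level[OF a0]
        stopped_sigma_subalgebra stopped_sigma_subalgebra]
    by (rule conjI)
qed

end
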